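(* The classes PosLimAvg and AsLimAvg are not closed under complement: there is an automaton $A$ in PosLimAvg such that no automaton $B$ in PosLimAvg satisfies $L_B=1-L_A$, and there is an automaton $A'$ in AsLimAvg such that no automaton $B'$ in AsLimAvg satisfies $L_{B'}=1-L_{A'}$.
   Context: A probabilistic weighted automaton over a finite alphabet $\Sigma$ is a tuple $A=(Q,\rho_I,\Sigma,\delta,\gamma)$ where $Q$ is a finite set of states, $\rho_I$ is a probability distribution on $Q$, $\delta:Q\times\Sigma\to\mathcal D(Q)$ assigns to each state and letter a probability distribution on $Q$, and $\gamma:Q\times\Sigma\times Q\to\mathbb Q$ is a weight function. A run over an infinite word $w=\sigma_1\sigma_2\dots$ is a sequence $r=q_0\sigma_1q_1\sigma_2\dots$ with $\rho_I(q_0)>0$ and $\delta(q_i,\sigma_{i+1})(q_{i+1})>0$ for all $i$; its weight sequence is $\gamma(r)=v_0v_1\dots$ with $v_i=\gamma(q_i,\sigma_{i+1},q_{i+1})$. For each $w$, the probabilities of finite run prefixes induce a probability measure $\mathbb P^A$ on runs over $w$. With $\mathsf{LimAvg}(v)=\liminf_n\frac1n\sum_{i<n}v_i$, PosLimAvg automata define $L^{>0}_A(w)=\sup\{\eta\mid \mathbb P^A(\{r:\mathsf{LimAvg}(\gamma(r))\ge\eta\})>0\}$ and AsLimAvg automata define $L^{=1}_A(w)=\sup\{\eta\mid \mathbb P^A(\{r:\mathsf{LimAvg}(\gamma(r))\ge\eta\})=1\}$. The complement of a quantitative language $L$ is $1-L$. *)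

theory Defs
  imports "HOL-Probability.Probability"
begin

record 'a pwa =
  pstates :: "nat set"
  pinit   :: "nat pmf"
  ptrans  :: "nat \<Rightarrow> 'a \<Rightarrow> nat pmf"
  pweight :: "nat \<Rightarrow> 'a \<Rightarrow> nat \<Rightarrow> rat"

definition wf_pwa :: "'a set \<Rightarrow> 'a pwa \<Rightarrow> bool" where
  "wf_pwa \<Sigma> A \<longleftrightarrow> finite (pstates A) \<and> set_pmf (pinit A) \<subseteq> pstates A \<and>
     (\<forall>q\<in>pstates A. \<forall>\<sigma>\<in>\<Sigma>. set_pmf (ptrans A q \<sigma>) \<subseteq> pstates A)"

text \<open>Infinite words over \<Sigma>: w i is the letter sigma_(i+1).\<close>
definition words :: "'a set \<Rightarrow> (nat \<Rightarrow> 'a) set" where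
  "words \<Sigma> = {w. \<forall>i. w i \<in> \<Sigma>}"

abbreviation seq_space :: "(nat \<Rightarrow> nat) measure" where
  "seq_space \<equiv> PiM UNIV (\<lambda>_. count_space UNIV)"

definition cyl :: "nat \<Rightarrow> (nat \<Rightarrow> nat) \<Rightarrow> (nat \<Rightarrow> nat) set" where
  "cyl n q = {r \<in> space seq_space. \<forall>i\<le>n. r i = q i}"

definition prefix_prob :: "'a pwa \<Rightarrow> (nat \<Rightarrow> 'a) \<Rightarrow> nat \<Rightarrow> (nat \<Rightarrow> nat) \<Rightarrow> real" where
  "prefix_prob A w n q = pmf (pinit A) (q 0) * (\<Prod>i<n. pmf (ptrans A (q i) (w i)) (q (Suc i)))"

definition run_measure :: "'a pwa \<Rightarrow> (nat \<Rightarrow> 'a) \<Rightarrow> (nat \<Rightarrow> nat) measure" where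
  "run_measure A w = (THE M. sets M = sets seq_space \<and> prob_space M \<and>
      (\<forall>n q. measure M (cyl n q) = prefix_prob A w n q))"

definition weight_seq :: "'a pwa \<Rightarrow> (nat \<Rightarrow> 'a) \<Rightarrow> (nat \<Rightarrow> nat) \<Rightarrow> nat \<Rightarrow> real" where
  "weight_seq A w r i = real_of_rat (pweight A (r i) (w i) (r (Suc i)))"

definition LimAvg :: "(nat \<Rightarrow> real) \<Rightarrow> ereal" where
  "LimAvg v = liminf (\<lambda>n. ereal ((\<Sum>i<n. v i) / real n))"

definition L_pos :: "'a pwa \<Rightarrow> (nat \<Rightarrow> 'a) \<Rightarrow> ereal" where
  "L_pos A w = Sup (ereal ` {\<eta>::real.
     measure (run_measure A w) {r \<in> space (run_measure A w). LimAvg (weight_seq A w r) \<ge> ereal \<eta>} > 0})"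

definition L_as :: "'a pwa \<Rightarrow> (nat \<Rightarrow> 'a) \<Rightarrow> ereal" where
  "L_as A w = Sup (ereal ` {\<eta>::real.
     measure (run_measure A w) {r \<in> space (run_measure A w). LimAvg (weight_seq A w r) \<ge> ereal \<eta>} = 1})"

end

theory Submission
  imports Defs
begin

text \<open>The first automaton, letter_pwa, has one state and weight equal to the letter read, so its
  value on a word over {0,1} is the lower limit of the letter averages. If B complemented it under
  PosLimAvg, then on every word ending in ones almost every run of B would have limit average below
  1/2, so with probability close to 1 its running average dips below 1/2 within a finite window.
  Alternating such windows with ever longer blocks of zeros yields a word whose letter averages
  drop to 1/4 infinitely often, so that B must have value at least 3/4 on it, while almost every
  run of B dips below 1/2 infinitely often, so that its value is at most 1/2.

  The second automaton, coin_pwa, moves on every letter 1 with probability 1/2 into an absorbing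
  state of weight 1; its AsLimAvg value is 1 on words with infinitely many ones and 0 otherwise.
  If B complemented it, then on every word ending in zeros almost every run of B would have limit
  average above 3/4, so from each state reachable on such words the partial sums along zeros stay
  above s/2 - C, except with small probability, uniformly over the finitely many states. Separating
  ever longer blocks of zeros by single ones and applying Borel-Cantelli, almost every run of B on
  the resulting word has limit average at least 1/2, although the word has infinitely many ones.\<close>

section \<open>The probability measure on runs\<close>

lemma space_seq_space[simp]: "space seq_space = UNIV"
  by (simp add: space_PiM)

lemma cyl_eq: "cyl n q = {r. \<forall>i\<le>n. r i = q i}"
  by (simp add: cyl_def)

lemma sets_cyl[measurable]: "cyl n q \<in> sets seq_space"
proof -
  have "cyl n q = (\<Inter>i\<in>{..n}. {r \<in> space seq_space. r i = q i})"
    by (auto simp: cyl_eq)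
  also have "\<dots> \<in> sets seq_space"
    by (intro sets.finite_INT) measurable
  finally show ?thesis .
qed

text \<open>A run is read off an independent family of choices: the choice indexed by (0, _) is the
  initial state, and the choice indexed by (i + 1, q) is the successor taken if the run is in q at
  time i.\<close>

definition choice_kernel :: "'a pwa \<Rightarrow> (nat \<Rightarrow> 'a) \<Rightarrow> nat \<times> nat \<Rightarrow> nat measure" where
  "choice_kernel B w j = measure_pmf (if fst j = 0 then pinit B else ptrans B (snd j) (w (fst j - 1)))"

primrec run_of_choices :: "(nat \<times> nat \<Rightarrow> nat) \<Rightarrow> nat \<Rightarrow> nat" where
  "run_of_choices x 0 = x (0,0)"
| "run_of_choices x (Suc n) = x (Suc n, run_of_choices x n)"

lemma space_choice_kernel[simp]: "space (choice_kernel B w j) = UNIV"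
  by (simp add: choice_kernel_def)

lemma sets_choice_kernel: "sets (choice_kernel B w j) = sets (count_space UNIV)"
  by (simp add: choice_kernel_def)

lemma space_choice_space[simp]: "space (PiM UNIV (choice_kernel B w)) = UNIV"
  by (simp add: space_PiM)

lemma run_of_choices_component_measurable: "(\<lambda>x. run_of_choices x n) \<in> measurable (PiM UNIV (choice_kernel B w)) (count_space UNIV)"
proof (induction n)
  case 0
  have "(\<lambda>x. x (0,0)) \<in> measurable (PiM UNIV (choice_kernel B w)) (choice_kernel B w (0,0))"
    by (rule measurable_component_singleton) auto
  then show ?case by (simp add: measurable_cong_sets[OF refl sets_choice_kernel])
next
  case (Suc n)
  have c: "(\<lambda>x. x (Suc n, i)) \<in> measurable (PiM UNIV (choice_kernel B w)) (count_space UNIV)" for i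
  proof -
    have "(\<lambda>x. x (Suc n, i)) \<in> measurable (PiM UNIV (choice_kernel B w)) (choice_kernel B w (Suc n, i))"
      by (rule measurable_component_singleton) auto
    then show ?thesis
      by (simp add: measurable_cong_sets[OF refl sets_choice_kernel])
  qed
  have "(\<lambda>x. (\<lambda>i x. x (Suc n, i)) (run_of_choices x n) x) \<in> measurable (PiM UNIV (choice_kernel B w)) (count_space UNIV)"
    by (rule measurable_compose_countable'[where I=UNIV, OF c Suc]) auto
  then show ?case by simp
qed

lemma run_of_choices_measurable: "run_of_choices \<in> measurable (PiM UNIV (choice_kernel B w)) seq_space"
  by (rule measurable_PiM_single') (auto simp: run_of_choices_component_measurable)

lemma vimage_run_of_choices_cyl:
  "run_of_choices -` cyl n q = {x. \<forall>j \<in> insert (0,0) ((\<lambda>i. (Suc i, q i)) ` {..<n}). x j \<in> {q (fst j)}}"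
proof -
  have "(\<forall>i\<le>n. run_of_choices x i = q i) \<longleftrightarrow> (x (0,0) = q 0 \<and> (\<forall>i<n. x (Suc i, q i) = q (Suc i)))" for x
  proof (induction n)
    case 0 then show ?case by simp
  next
    case (Suc n)
    have "(\<forall>i\<le>Suc n. run_of_choices x i = q i) \<longleftrightarrow> (\<forall>i\<le>n. run_of_choices x i = q i) \<and> run_of_choices x (Suc n) = q (Suc n)"
      by (auto simp: le_Suc_eq)
    also have "\<dots> \<longleftrightarrow> (x (0,0) = q 0 \<and> (\<forall>i<n. x (Suc i, q i) = q (Suc i))) \<and> x (Suc n, q n) = q (Suc n)"
      using Suc by auto
    also have "\<dots> \<longleftrightarrow> (x (0,0) = q 0 \<and> (\<forall>i<Suc n. x (Suc i, q i) = q (Suc i)))"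
      by (auto simp: less_Suc_eq)
    finally show ?case .
  qed
  then show ?thesis by (auto simp: cyl_eq)
qed

lemma run_measure_exists:
  "\<exists>M. sets M = sets seq_space \<and> prob_space M \<and> (\<forall>n q. measure M (cyl n q) = prefix_prob B w n q)"
proof -
  interpret P: product_prob_space "choice_kernel B w" UNIV
    by unfold_locales (auto simp: choice_kernel_def measure_pmf.emeasure_space_1 intro!: exI[of _ "{UNIV}"])
  let ?O = "PiM UNIV (choice_kernel B w)"
  let ?M = "distr ?O seq_space run_of_choices"
  have "prob_space ?M"
    by (rule P.prob_space_distr) (rule run_of_choices_measurable)
  moreover have "measure ?M (cyl n q) = prefix_prob B w n q" for n q
  proof -
    define J where "J = insert (0::nat,0::nat) ((\<lambda>i. (Suc i, q i)) ` {..<n})"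
    have fin: "finite J" by (simp add: J_def)
    have "measure ?M (cyl n q) = measure ?O (run_of_choices -` cyl n q \<inter> space ?O)"
      by (rule measure_distr) (auto intro: run_of_choices_measurable)
    also have "run_of_choices -` cyl n q \<inter> space ?O = prod_emb UNIV (choice_kernel B w) J (PiE J (\<lambda>j. {q (fst j)}))"
      unfolding vimage_run_of_choices_cyl J_def[symmetric]
      by (auto simp: prod_emb_def PiE_def Pi_def extensional_def space_PiM)
    also have "measure ?O \<dots> = (\<Prod>j\<in>J. measure (choice_kernel B w j) {q (fst j)})"
      using fin by (intro P.measure_PiM_emb) (auto simp: sets_choice_kernel)
    also have "\<dots> = prefix_prob B w n q"
    proof -
      have inj: "inj_on (\<lambda>i. (Suc i, q i)) {..<n}" by (auto simp: inj_on_def)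
      have nin: "(0,0) \<notin> (\<lambda>i. (Suc i, q i)) ` {..<n}" by auto
      show ?thesis
        unfolding J_def prefix_prob_def
        by (simp add: prod.insert[OF _ nin] prod.reindex[OF inj] choice_kernel_def measure_pmf_single)
    qed
    finally show ?thesis .
  qed
  ultimately show ?thesis by (intro exI[of _ ?M]) simp
qed

definition cyl_generator :: "(nat \<Rightarrow> nat) set set" where
  "cyl_generator = insert {} (range (\<lambda>(n,q). cyl n q))"

lemma cyl_Int_cyl: "cyl n q \<inter> cyl m p \<in> cyl_generator"
proof (cases "\<forall>i\<le>min n m. q i = p i")
  case True
  have "cyl n q \<inter> cyl m p = cyl (max n m) (\<lambda>i. if i \<le> n then q i else p i)"
  proof (intro set_eqI iffI)
    fix x assume "x \<in> cyl n q \<inter> cyl m p"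
    then show "x \<in> cyl (max n m) (\<lambda>i. if i \<le> n then q i else p i)"
      by (auto simp: cyl_eq)
  next
    fix x assume x: "x \<in> cyl (max n m) (\<lambda>i. if i \<le> n then q i else p i)"
    have "x i = q i" if "i \<le> n" for i using x that by (auto simp: cyl_eq)
    moreover have "x i = p i" if "i \<le> m" for i
    proof (cases "i \<le> n")
      case True then show ?thesis using x that \<open>\<forall>i\<le>min n m. q i = p i\<close> by (auto simp: cyl_eq)
    next
      case False then show ?thesis using x that by (auto simp: cyl_eq)
    qed
    ultimately show "x \<in> cyl n q \<inter> cyl m p" by (auto simp: cyl_eq)
  qed
  then show ?thesis by (auto simp: cyl_generator_def)
next
  case False
  then have "cyl n q \<inter> cyl m p = {}" by (auto simp: cyl_eq)
  then show ?thesis by (auto simp: cyl_generator_def)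
qed

lemma Int_stable_cyl_generator: "Int_stable cyl_generator"
  proof -
  have "a \<inter> b \<in> cyl_generator" if ab: "a \<in> cyl_generator" "b \<in> cyl_generator" for a b
  proof -
    consider "a = {}" | "b = {}" | n q m p where "a = cyl n q" "b = cyl m p"
      using ab unfolding cyl_generator_def by fastforce
    then show ?thesis
    proof cases
      case 3 then show ?thesis using cyl_Int_cyl by simp
    qed (auto simp: cyl_generator_def)
  qed
  then show ?thesis unfolding Int_stable_def by blast
qed

lemma sets_seq_space_eq_sigma_cyl: "sets seq_space = sigma_sets UNIV cyl_generator"
proof
  have sa: "sigma_algebra UNIV (sigma_sets UNIV cyl_generator)"
    by (rule sigma_algebra_sigma_sets) auto
  have "{f. f i \<in> A} \<in> sigma_sets UNIV cyl_generator" for i and A :: "nat set"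
  proof -
    let ?X = "(\<lambda>xs. cyl i (\<lambda>j. xs ! j)) ` {xs :: nat list. length xs = Suc i \<and> xs ! i \<in> A}"
    have eq: "{f. f i \<in> A} = \<Union> ?X"
    proof safe
      fix f :: "nat \<Rightarrow> nat" assume "f i \<in> A"
      show "f \<in> \<Union> ?X"
      proof (rule UN_I[of "map f [0..<Suc i]"])
        show "map f [0..<Suc i] \<in> {xs. length xs = Suc i \<and> xs ! i \<in> A}"
          using \<open>f i \<in> A\<close> by (simp del: upt_Suc)
        show "f \<in> cyl i ((!) (map f [0..<Suc i]))"
          by (auto simp: cyl_eq simp del: upt_Suc)
      qed
    qed (auto simp: cyl_eq)
    have "\<Union> ?X \<in> sigma_sets UNIV cyl_generator"
      by (rule sigma_algebra.countable_Union[OF sa]) (auto simp: cyl_generator_def)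
    then show ?thesis using eq by simp
  qed
  moreover have UE: "(UNIV \<rightarrow>\<^sub>E space (count_space UNIV)) = (UNIV :: (nat\<Rightarrow>nat) set)"
    by (auto simp: PiE_def extensional_def)
  ultimately show "sets seq_space \<subseteq> sigma_sets UNIV cyl_generator"
    unfolding sets_PiM_single UE by (intro sigma_algebra.sigma_sets_subset[OF sa]) auto
next
  show "sigma_sets UNIV cyl_generator \<subseteq> sets seq_space"
  proof -
    have "cyl_generator \<subseteq> sets seq_space" by (auto simp: cyl_generator_def)
    from sets.sigma_sets_subset[OF this] show ?thesis by simp
  qed
qed

lemma run_measure_unique:
  assumes M: "sets M = sets seq_space" "prob_space M" "\<And>n q. measure M (cyl n q) = prefix_prob B w n q"
  and N: "sets N = sets seq_space" "prob_space N" "\<And>n q. measure N (cyl n q) = prefix_prob B w n q"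
  shows "M = N"
proof -
  interpret m: prob_space M by fact
  interpret n: prob_space N by fact
  have eq: "emeasure M X = emeasure N X" if "X \<in> cyl_generator" for X
    using that by (auto simp: cyl_generator_def m.emeasure_eq_measure n.emeasure_eq_measure M(3) N(3))
  have sM: "sets M = sigma_sets UNIV cyl_generator" using M(1) sets_seq_space_eq_sigma_cyl by simp
  have sN: "sets N = sigma_sets UNIV cyl_generator" using N(1) sets_seq_space_eq_sigma_cyl by simp
  have r: "range (\<lambda>i. cyl 0 (\<lambda>_. i)) \<subseteq> cyl_generator" by (auto simp: cyl_generator_def)
  have u: "(\<Union>i. cyl 0 (\<lambda>_. i)) = UNIV" by (auto simp: cyl_eq)
  show ?thesis
    by (rule measure_eqI_generator_eq[OF Int_stable_cyl_generator _ eq sM sN r u]) auto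
qed

lemma run_measure_characterization:
  "sets (run_measure B w) = sets seq_space \<and> prob_space (run_measure B w) \<and>
   (\<forall>n q. measure (run_measure B w) (cyl n q) = prefix_prob B w n q)"
proof -
  let ?P = "\<lambda>M. sets M = sets seq_space \<and> prob_space M \<and> (\<forall>n q. measure M (cyl n q) = prefix_prob B w n q)"
  obtain M where M: "?P M" using run_measure_exists by blast
  have "\<exists>!M. ?P M"
  proof (rule ex1I[of _ M])
    show "?P M" by fact
    fix N assume "?P N"
    then show "N = M" using M run_measure_unique[of N B w M] by blast
  qed
  then show ?thesis unfolding run_measure_def by (rule theI')
qed

lemma sets_run_measure[measurable_cong, simp]: "sets (run_measure B w) = sets seq_space"
  using run_measure_characterization by blast

lemma space_run_measure[simp]: "space (run_measure B w) = UNIV"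
  using sets_eq_imp_space_eq[OF sets_run_measure] by simp

lemma prob_space_run_measure: "prob_space (run_measure B w)"
  using run_measure_characterization by blast

lemma measure_run_measure_cyl: "measure (run_measure B w) (cyl n q) = prefix_prob B w n q"
  using run_measure_characterization by blast

primrec prefix_pmf :: "'a pwa \<Rightarrow> (nat \<Rightarrow> 'a) \<Rightarrow> nat \<Rightarrow> nat list pmf" where
  "prefix_pmf B w 0 = map_pmf (\<lambda>q. [q]) (pinit B)"
| "prefix_pmf B w (Suc n) = prefix_pmf B w n \<bind> (\<lambda>xs. map_pmf (\<lambda>q. xs @ [q]) (ptrans B (last xs) (w n)))"

lemma set_pmf_prefix_pmfD:
  "xs \<in> set_pmf (prefix_pmf B w n) \<Longrightarrow> length xs = Suc n \<and> xs ! 0 \<in> set_pmf (pinit B) \<and>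
     (\<forall>i<n. xs ! Suc i \<in> set_pmf (ptrans B (xs ! i) (w i)))"
proof (induction n arbitrary: xs)
  case 0 then show ?case by auto
next
  case (Suc n)
  from Suc.prems obtain ys q where ys: "ys \<in> set_pmf (prefix_pmf B w n)" and xs: "xs = ys @ [q]"
    and q: "q \<in> set_pmf (ptrans B (last ys) (w n))" by auto
  from Suc.IH[OF ys] have IH: "length ys = Suc n" "ys ! 0 \<in> set_pmf (pinit B)"
    "\<forall>i<n. ys ! Suc i \<in> set_pmf (ptrans B (ys ! i) (w i))" by auto
  have last: "last ys = ys ! n" using IH(1) by (subst last_conv_nth) auto
  show ?case
  proof (intro conjI allI impI)
    show "length xs = Suc (Suc n)" using xs IH by simp
    show "xs ! 0 \<in> set_pmf (pinit B)" using xs IH by (simp add: nth_append)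
    fix i assume "i < Suc n"
    then consider "i < n" | "i = n" by linarith
    then show "xs ! Suc i \<in> set_pmf (ptrans B (xs ! i) (w i))"
    proof cases
      case 1 then show ?thesis using xs IH by (simp add: nth_append)
    next
      case 2 then show ?thesis using xs IH q last by (simp add: nth_append)
    qed
  qed
qed

lemma prefix_prob_cong:
  "(\<And>i. i \<le> n \<Longrightarrow> q i = q' i) \<Longrightarrow> prefix_prob B w n q = prefix_prob B w n q'"
  unfolding prefix_prob_def by (intro arg_cong2[where f="(*)"] prod.cong) auto

lemma prefix_prob_Suc:
  "prefix_prob B w (Suc n) q = prefix_prob B w n q * pmf (ptrans B (q n) (w n)) (q (Suc n))"
  unfolding prefix_prob_def by simp

lemma pmf_prefix_pmf:
  "pmf (prefix_pmf B w n) xs = (if length xs = Suc n then prefix_prob B w n (\<lambda>i. xs ! i) else 0)"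
proof (induction n arbitrary: xs)
  case 0
  show ?case
  proof (cases "length xs = 1")
    case True
    then obtain q where xs: "xs = [q]" by (cases xs) auto
    have "pmf (map_pmf (\<lambda>q. [q]) (pinit B)) [q] = pmf (pinit B) q"
      by (rule pmf_map_inj') (auto simp: inj_def)
    then show ?thesis using xs by (simp add: prefix_prob_def)
  next
    case False
    then show ?thesis by (auto intro!: pmf_map_outside)
  qed
next
  case (Suc n)
  let ?f = "\<lambda>ys. pmf (map_pmf (\<lambda>q. ys @ [q]) (ptrans B (last ys) (w n))) xs"
  have "pmf (prefix_pmf B w (Suc n)) xs = (\<integral>ys. ?f ys \<partial>measure_pmf (prefix_pmf B w n))"
    by (simp add: pmf_bind)
  also have "\<dots> = (if length xs = Suc (Suc n) then prefix_prob B w (Suc n) (\<lambda>i. xs ! i) else 0)"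
  proof (cases "length xs = Suc (Suc n)")
    case True
    define ys where "ys = butlast xs"
    define q where "q = last xs"
    have xs: "xs = ys @ [q]" using True unfolding ys_def q_def
      by (metis append_butlast_last_id list.size(3) nat.distinct(1))
    have ly: "length ys = Suc n" using True by (simp add: ys_def)
    have fz: "?f zs = 0" if "zs \<noteq> ys" for zs
      using that xs by (intro pmf_map_outside) auto
    have fy: "?f ys = pmf (ptrans B (last ys) (w n)) q"
      unfolding xs by (rule pmf_map_inj') (auto simp: inj_def)
    have "(\<integral>zs. ?f zs \<partial>measure_pmf (prefix_pmf B w n)) = (\<Sum>a\<in>{ys}. pmf (prefix_pmf B w n) a *\<^sub>R ?f a)"
      by (rule integral_measure_pmf) (use fz in auto)
    also have "\<dots> = prefix_prob B w n (\<lambda>i. ys ! i) * pmf (ptrans B (ys ! n) (w n)) q"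
      using Suc.IH[of ys] ly fy by (subst (asm) last_conv_nth) auto
    also have "\<dots> = prefix_prob B w (Suc n) (\<lambda>i. xs ! i)"
      unfolding prefix_prob_Suc using ly
      by (subst prefix_prob_cong[of n "\<lambda>i. xs ! i" "\<lambda>i. ys ! i"]) (auto simp: xs nth_append)
    finally show ?thesis using True by simp
  next
    case False
    have "?f zs = 0" if "zs \<in> set_pmf (prefix_pmf B w n)" for zs
      using set_pmf_prefix_pmfD[OF that] False by (intro pmf_map_outside) auto
    then have "(\<integral>zs. ?f zs \<partial>measure_pmf (prefix_pmf B w n)) = (\<Sum>a\<in>{}. pmf (prefix_pmf B w n) a *\<^sub>R ?f a)"
      by (intro integral_measure_pmf) auto
    then show ?thesis using False by simp
  qed
  finally show ?case .
qed

lemma measurable_prefix_list: "(\<lambda>r. map r [0..<Suc n]) \<in> measurable seq_space (count_space UNIV)"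
proof (subst measurable_count_space_eq2_countable, safe)
  fix xs :: "nat list"
  have "(\<lambda>r. map r [0..<Suc n]) -` {xs} = (if length xs = Suc n then cyl n (\<lambda>i. xs ! i) else {})"
  proof (cases "length xs = Suc n")
    case True
    have "map r [0..<Suc n] = xs \<longleftrightarrow> (\<forall>i\<le>n. r i = xs ! i)" for r
      using True by (auto simp: list_eq_iff_nth_eq simp del: upt_Suc)
    then show ?thesis using True by (auto simp: cyl_eq)
  qed auto
  then show "(\<lambda>r. map r [0..<Suc n]) -` {xs} \<inter> space seq_space \<in> sets seq_space" by simp
qed simp

lemma distr_run_measure_prefix:
  "distr (run_measure B w) (count_space UNIV) (\<lambda>r. map r [0..<Suc n]) = measure_pmf (prefix_pmf B w n)"
proof (rule measure_eqI_countable[where A=UNIV])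
  interpret prob_space "run_measure B w" by (rule prob_space_run_measure)
  fix xs :: "nat list"
  have pre: "(\<lambda>r. map r [0..<Suc n]) -` {xs} = (if length xs = Suc n then cyl n (\<lambda>i. xs ! i) else {})"
  proof (cases "length xs = Suc n")
    case True
    have "map r [0..<Suc n] = xs \<longleftrightarrow> (\<forall>i\<le>n. r i = xs ! i)" for r
      using True by (auto simp: list_eq_iff_nth_eq simp del: upt_Suc)
    then show ?thesis using True by (auto simp: cyl_eq)
  qed auto
  have "emeasure (distr (run_measure B w) (count_space UNIV) (\<lambda>r. map r [0..<Suc n])) {xs}
      = emeasure (run_measure B w) ((\<lambda>r. map r [0..<Suc n]) -` {xs})"
    by (subst emeasure_distr) (auto simp: measurable_cong_sets[OF sets_run_measure refl] measurable_prefix_list simp del: upt_Suc)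
  also have "\<dots> = pmf (prefix_pmf B w n) xs"
    unfolding pre pmf_prefix_pmf by (auto simp: emeasure_eq_measure measure_run_measure_cyl)
  finally show "emeasure (distr (run_measure B w) (count_space UNIV) (\<lambda>r. map r [0..<Suc n])) {xs} =
     emeasure (measure_pmf (prefix_pmf B w n)) {xs}" by (simp add: emeasure_pmf_single)
qed auto

lemma measure_run_measure_finite_horizon:
  assumes "\<And>r r'. (\<And>i. i \<le> n \<Longrightarrow> r i = r' i) \<Longrightarrow> P r = P r'"
  shows "measure (run_measure B w) {r. P r} = measure_pmf.prob (prefix_pmf B w n) {xs. P (\<lambda>i. xs ! i)}"
proof -
  have eq: "{r. P r} = (\<lambda>r. map r [0..<Suc n]) -` {xs. P (\<lambda>i. xs ! i)}"
  proof -
    have "P r = P (\<lambda>i. map r [0..<Suc n] ! i)" for r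
      by (rule assms) (simp del: upt_Suc add: nth_map_upt)
    then show ?thesis by auto
  qed
  have "measure (run_measure B w) {r. P r} =
    measure (distr (run_measure B w) (count_space UNIV) (\<lambda>r. map r [0..<Suc n])) {xs. P (\<lambda>i. xs ! i)}"
    unfolding eq by (subst measure_distr) (auto simp: measurable_cong_sets[OF sets_run_measure refl] measurable_prefix_list simp del: upt_Suc)
  then show ?thesis by (simp add: distr_run_measure_prefix del: upt_Suc)
qed

lemma finite_horizon_in_sets:
  assumes "\<And>r r'. (\<And>i. i \<le> n \<Longrightarrow> r i = r' i) \<Longrightarrow> P r = P r'"
  shows "{r. P r} \<in> sets seq_space"
proof -
  have eq: "{r. P r} = (\<lambda>r. map r [0..<Suc n]) -` {xs. P (\<lambda>i. xs ! i)}"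
  proof -
    have "P r = P (\<lambda>i. map r [0..<Suc n] ! i)" for r
      by (rule assms) (simp del: upt_Suc add: nth_map_upt)
    then show ?thesis by auto
  qed
  show ?thesis unfolding eq using measurable_sets[OF measurable_prefix_list, of "{xs. P (\<lambda>i. xs ! i)}" n] by simp
qed

lemma prefix_pmf_cong_word: "(\<And>i. i < n \<Longrightarrow> v i = w i) \<Longrightarrow> prefix_pmf B v n = prefix_pmf B w n"
  by (induction n) auto

lemma measure_run_measure_cong_word:
  assumes "\<And>i. i < N \<Longrightarrow> v i = w i"
    and "\<And>r r'. (\<And>i. i \<le> N \<Longrightarrow> r i = r' i) \<Longrightarrow> P r = P r'"
  shows "measure (run_measure B v) {r. P r} = measure (run_measure B w) {r. P r}"
proof -
  have "measure (run_measure B v) {r. P r} = measure_pmf.prob (prefix_pmf B v N) {xs. P (\<lambda>i. xs ! i)}"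
    by (rule measure_run_measure_finite_horizon) (rule assms(2))
  also have "prefix_pmf B v N = prefix_pmf B w N"
    by (rule prefix_pmf_cong_word) (rule assms(1))
  also have "measure_pmf.prob (prefix_pmf B w N) {xs. P (\<lambda>i. xs ! i)} = measure (run_measure B w) {r. P r}"
    by (rule measure_run_measure_finite_horizon[symmetric]) (rule assms(2))
  finally show ?thesis .
qed

lemma prefix_pmf_in_states:
  assumes wf: "wf_pwa \<Sigma> B" and w: "w \<in> words \<Sigma>" and xs: "xs \<in> set_pmf (prefix_pmf B w n)"
  shows "\<forall>i\<le>n. xs ! i \<in> pstates B"
proof (intro allI impI)
  fix i assume "i \<le> n"
  then show "xs ! i \<in> pstates B"
  proof (induction i)
    case 0 then show ?case using set_pmf_prefix_pmfD[OF xs] wf by (auto simp: wf_pwa_def)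
  next
    case (Suc i)
    then have "xs ! i \<in> pstates B" by simp
    moreover have "xs ! Suc i \<in> set_pmf (ptrans B (xs ! i) (w i))" using set_pmf_prefix_pmfD[OF xs] Suc.prems by auto
    moreover have "set_pmf (ptrans B (xs ! i) (w i)) \<subseteq> pstates B"
      using wf w \<open>xs ! i \<in> pstates B\<close> unfolding wf_pwa_def words_def by blast
    ultimately show ?case by blast
  qed
qed

lemma state_in_pstates_if_pos:
  assumes wf: "wf_pwa \<Sigma> B" and w: "w \<in> words \<Sigma>" and p: "0 < measure (run_measure B w) {r. r t = q}"
  shows "q \<in> pstates B"
proof -
  have "measure (run_measure B w) {r. r t = q} = measure_pmf.prob (prefix_pmf B w t) {xs. xs ! t = q}"
    by (rule measure_run_measure_finite_horizon) auto
  with p have "set_pmf (prefix_pmf B w t) \<inter> {xs. xs ! t = q} \<noteq> {}"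
    by (auto simp: measure_pmf_zero_iff[symmetric])
  then obtain xs where "xs \<in> set_pmf (prefix_pmf B w t)" "xs ! t = q" by auto
  then show ?thesis using prefix_pmf_in_states[OF wf w] by auto
qed

lemma AE_run_in_states:
  assumes wf: "wf_pwa \<Sigma> B" and w: "w \<in> words \<Sigma>"
  shows "AE r in run_measure B w. \<forall>i. r i \<in> pstates B"
proof -
  interpret prob_space "run_measure B w" by (rule prob_space_run_measure)
  define Bad :: "nat \<Rightarrow> (nat \<Rightarrow> nat) set" where "Bad n = {r. \<not> (\<forall>i\<le>n. r i \<in> pstates B)}" for n
  have inv: "\<And>r r'. (\<And>i. i \<le> n \<Longrightarrow> r i = r' i) \<Longrightarrow> (\<not> (\<forall>i\<le>n. r i \<in> pstates B)) = (\<not> (\<forall>i\<le>n. r' i \<in> pstates B))" for n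
    by auto
  have Bs: "Bad n \<in> sets (run_measure B w)" for n
    unfolding Bad_def sets_run_measure by (rule finite_horizon_in_sets) (rule inv)
  have B0: "measure (run_measure B w) (Bad n) = 0" for n
  proof -
    have "measure (run_measure B w) (Bad n) = measure_pmf.prob (prefix_pmf B w n) {xs. \<not> (\<forall>i\<le>n. xs ! i \<in> pstates B)}"
      unfolding Bad_def by (rule measure_run_measure_finite_horizon) (rule inv)
    also have "\<dots> = 0"
    proof -
      have "set_pmf (prefix_pmf B w n) \<inter> {xs. \<not> (\<forall>i\<le>n. xs ! i \<in> pstates B)} = {}"
        using prefix_pmf_in_states[OF wf w] by blast
      then show ?thesis by (simp only: measure_pmf_zero_iff)
    qed
    finally show ?thesis .
  qed
  have nul: "(\<Union>n. Bad n) \<in> null_sets (run_measure B w)"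
    using Bs B0 by (intro null_sets_UN) (auto simp: emeasure_eq_measure)
  moreover have "{r \<in> space (run_measure B w). \<not> (\<forall>i. r i \<in> pstates B)} \<subseteq> (\<Union>n. Bad n)"
    by (auto simp: Bad_def)
  ultimately show ?thesis by (intro AE_I[where N="\<Union>n. Bad n"]) (auto simp: null_sets_def)
qed

section \<open>Restarting runs: the Markov property\<close>

definition start_at :: "'a pwa \<Rightarrow> nat \<Rightarrow> 'a pwa" where
  "start_at B q = B\<lparr>pinit := return_pmf q\<rparr>"

lemma start_at_simps[simp]: "pinit (start_at B q) = return_pmf q" "ptrans (start_at B q) = ptrans B"
  "pweight (start_at B q) = pweight B" "pstates (start_at B q) = pstates B"
  by (simp_all add: start_at_def)


lemma prefix_pmf_add:
  "prefix_pmf B w (t + n) = prefix_pmf B w t \<bind> (\<lambda>xs. map_pmf (\<lambda>ys. xs @ tl ys) (prefix_pmf (start_at B (last xs)) (\<lambda>i. w (t + i)) n))"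
proof (induction n)
  case 0
  have "prefix_pmf B w t \<bind> (\<lambda>xs. map_pmf (\<lambda>ys. xs @ tl ys) (prefix_pmf (start_at B (last xs)) (\<lambda>i. w (t + i)) 0))
      = prefix_pmf B w t \<bind> return_pmf"
    by (simp add: map_pmf_def bind_return_pmf)
  then show ?case by (simp add: bind_return_pmf')
next
  case (Suc n)
  have "prefix_pmf B w (t + Suc n) = prefix_pmf B w (t + n) \<bind> (\<lambda>xs. map_pmf (\<lambda>q. xs @ [q]) (ptrans B (last xs) (w (t + n))))"
    by simp
  also have "\<dots> = prefix_pmf B w t \<bind> (\<lambda>xs. prefix_pmf (start_at B (last xs)) (\<lambda>i. w (t + i)) n \<bind>
       (\<lambda>ys. map_pmf (\<lambda>q. xs @ tl ys @ [q]) (ptrans B (last (xs @ tl ys)) (w (t + n)))))"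
    unfolding Suc by (simp add: bind_assoc_pmf bind_map_pmf)
  also have "\<dots> = prefix_pmf B w t \<bind> (\<lambda>xs. prefix_pmf (start_at B (last xs)) (\<lambda>i. w (t + i)) n \<bind>
       (\<lambda>ys. map_pmf (\<lambda>q. xs @ tl (ys @ [q])) (ptrans B (last ys) (w (t + n)))))"
  proof (intro bind_pmf_cong refl)
    fix xs ys assume xs: "xs \<in> set_pmf (prefix_pmf B w t)" and ys: "ys \<in> set_pmf (prefix_pmf (start_at B (last xs)) (\<lambda>i. w (t + i)) n)"
    from set_pmf_prefix_pmfD[OF xs] have lx: "length xs = Suc t" by simp
    from set_pmf_prefix_pmfD[OF ys] have ly: "length ys = Suc n" and y0: "ys ! 0 = last xs" by auto
    have "last (xs @ tl ys) = last ys"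
    proof (cases "tl ys = []")
      case True
      then have "ys = [ys ! 0]" using ly by (cases ys) auto
      then show ?thesis using True y0 lx by (metis append_Nil2 last_ConsL)
    next
      case False
      then show ?thesis by (simp add: last_tl)
    qed
    moreover have "tl (ys @ [q]) = tl ys @ [q]" for q using ly by (cases ys) auto
    ultimately show "map_pmf (\<lambda>q. xs @ tl ys @ [q]) (ptrans B (last (xs @ tl ys)) (w (t + n))) =
         map_pmf (\<lambda>q. xs @ tl (ys @ [q])) (ptrans B (last ys) (w (t + n)))" by simp
  qed
  also have "\<dots> = prefix_pmf B w t \<bind> (\<lambda>xs. map_pmf (\<lambda>ys. xs @ tl ys) (prefix_pmf (start_at B (last xs)) (\<lambda>i. w (t + i)) (Suc n)))"
    by (simp add: map_bind_pmf map_pmf_comp)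
  finally show ?case .
qed

lemma integrable_measure_pmf_prob: "integrable (measure_pmf p) (\<lambda>x. measure_pmf.prob (f x) A)"
  by (rule measure_pmf.integrable_const_bound[where B=1]) auto

lemma measure_bind_pmf_eq_expectation:
  "measure_pmf.prob (bind_pmf p f) A = measure_pmf.expectation p (\<lambda>x. measure_pmf.prob (f x) A)"
proof -
  have "ennreal (measure_pmf.prob (bind_pmf p f) A) = emeasure (measure_pmf (bind_pmf p f)) A"
    by (simp add: measure_pmf.emeasure_eq_measure)
  also have "\<dots> = (\<integral>\<^sup>+x. emeasure (measure_pmf (f x)) A \<partial>measure_pmf p)" by simp
  also have "\<dots> = (\<integral>\<^sup>+x. ennreal (measure_pmf.prob (f x) A) \<partial>measure_pmf p)"
    by (simp add: measure_pmf.emeasure_eq_measure)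
  also have "\<dots> = ennreal (measure_pmf.expectation p (\<lambda>x. measure_pmf.prob (f x) A))"
    by (rule nn_integral_eq_integral[OF integrable_measure_pmf_prob]) auto
  finally show ?thesis by (simp add: integral_nonneg_AE)
qed

lemma drop_append_tl:
  assumes "length xs = Suc t" "ys \<noteq> []" "ys ! 0 = last xs"
  shows "drop t (xs @ tl ys) = ys"
proof -
  obtain xs' x where xs: "xs = xs' @ [x]" using assms(1) by (cases xs rule: rev_cases) auto
  have "length xs' = t" using assms(1) xs by simp
  then show ?thesis using xs assms(2,3) by (cases ys) auto
qed

lemma measure_prefix_pmf_add_drop:
  "measure_pmf.prob (prefix_pmf B v (t + n)) {zs. \<Psi> (drop t zs)} =
   measure_pmf.expectation (prefix_pmf B v t) (\<lambda>xs. measure_pmf.prob (prefix_pmf (start_at B (last xs)) (\<lambda>i. v (t + i)) n) {ys. \<Psi> ys})"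
proof -
  have "measure_pmf.prob (prefix_pmf B v (t + n)) {zs. \<Psi> (drop t zs)} =
     measure_pmf.expectation (prefix_pmf B v t) (\<lambda>xs. measure_pmf.prob (map_pmf (\<lambda>ys. xs @ tl ys) (prefix_pmf (start_at B (last xs)) (\<lambda>i. v (t + i)) n)) {zs. \<Psi> (drop t zs)})"
    unfolding prefix_pmf_add by (rule measure_bind_pmf_eq_expectation)
  also have "\<dots> = measure_pmf.expectation (prefix_pmf B v t) (\<lambda>xs. measure_pmf.prob (prefix_pmf (start_at B (last xs)) (\<lambda>i. v (t + i)) n) {ys. \<Psi> ys})"
  proof (rule integral_cong_AE)
    show "AE xs in measure_pmf (prefix_pmf B v t). measure_pmf.prob (map_pmf (\<lambda>ys. xs @ tl ys) (prefix_pmf (start_at B (last xs)) (\<lambda>i. v (t + i)) n)) {zs. \<Psi> (drop t zs)}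
        = measure_pmf.prob (prefix_pmf (start_at B (last xs)) (\<lambda>i. v (t + i)) n) {ys. \<Psi> ys}"
    proof (rule AE_pmfI)
      fix xs assume xs: "xs \<in> set_pmf (prefix_pmf B v t)"
      have lx: "length xs = Suc t" using set_pmf_prefix_pmfD[OF xs] by simp
      let ?p = "prefix_pmf (start_at B (last xs)) (\<lambda>i. v (t + i)) n"
      have "(\<lambda>ys. xs @ tl ys) -` {zs. \<Psi> (drop t zs)} \<inter> set_pmf ?p = {ys. \<Psi> ys} \<inter> set_pmf ?p"
      proof (intro set_eqI iffI)
        fix ys assume ys: "ys \<in> (\<lambda>ys. xs @ tl ys) -` {zs. \<Psi> (drop t zs)} \<inter> set_pmf ?p"
        then have "ys \<in> set_pmf ?p" by auto
        from set_pmf_prefix_pmfD[OF this] have "length ys = Suc n" "ys ! 0 = last xs" by auto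
        then have "drop t (xs @ tl ys) = ys" using lx
          by (intro drop_append_tl) auto
        then show "ys \<in> {ys. \<Psi> ys} \<inter> set_pmf ?p" using ys by simp
      next
        fix ys assume ys: "ys \<in> {ys. \<Psi> ys} \<inter> set_pmf ?p"
        then have "ys \<in> set_pmf ?p" by auto
        from set_pmf_prefix_pmfD[OF this] have "length ys = Suc n" "ys ! 0 = last xs" by auto
        then have "drop t (xs @ tl ys) = ys" using lx
          by (intro drop_append_tl) auto
        then show "ys \<in> (\<lambda>ys. xs @ tl ys) -` {zs. \<Psi> (drop t zs)} \<inter> set_pmf ?p" using ys by simp
      qed
      note eq = this
      have "measure_pmf.prob (map_pmf (\<lambda>ys. xs @ tl ys) ?p) {zs. \<Psi> (drop t zs)} = measure_pmf.prob ?p ((\<lambda>ys. xs @ tl ys) -` {zs. \<Psi> (drop t zs)})"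
        by simp
      also have "\<dots> = measure_pmf.prob ?p ((\<lambda>ys. xs @ tl ys) -` {zs. \<Psi> (drop t zs)} \<inter> set_pmf ?p)"
        by (rule measure_Int_set_pmf[symmetric])
      also have "\<dots> = measure_pmf.prob ?p ({ys. \<Psi> ys} \<inter> set_pmf ?p)" by (simp only: eq)
      also have "\<dots> = measure_pmf.prob ?p {ys. \<Psi> ys}" by (rule measure_Int_set_pmf)
      finally show "measure_pmf.prob (map_pmf (\<lambda>ys. xs @ tl ys) ?p) {zs. \<Psi> (drop t zs)} = measure_pmf.prob ?p {ys. \<Psi> ys}" .
    qed
  qed simp_all
  finally show ?thesis .
qed

lemma measure_pmf_prob_cong_set_pmf:
  "(\<And>x. x \<in> set_pmf p \<Longrightarrow> x \<in> A \<longleftrightarrow> x \<in> B) \<Longrightarrow> measure_pmf.prob p A = measure_pmf.prob p B"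
proof -
  assume h: "\<And>x. x \<in> set_pmf p \<Longrightarrow> x \<in> A \<longleftrightarrow> x \<in> B"
  have "A \<inter> set_pmf p = B \<inter> set_pmf p" using h by blast
  then have "measure_pmf.prob p (A \<inter> set_pmf p) = measure_pmf.prob p (B \<inter> set_pmf p)" by simp
  then show ?thesis by (simp only: measure_Int_set_pmf)
qed

lemma measure_run_measure_shift:
  assumes inv: "\<And>r r'. (\<And>i. i \<le> n \<Longrightarrow> r i = r' i) \<Longrightarrow> \<Phi> r = \<Phi> r'"
  shows "measure (run_measure B v) {r. \<Phi> (\<lambda>i. r (t + i))} =
    measure_pmf.expectation (prefix_pmf B v t) (\<lambda>xs. measure (run_measure (start_at B (last xs)) (\<lambda>i. v (t + i))) {r. \<Phi> r})"
proof -
  have "measure (run_measure B v) {r. \<Phi> (\<lambda>i. r (t + i))} = measure_pmf.prob (prefix_pmf B v (t + n)) {zs. \<Phi> (\<lambda>i. zs ! (t + i))}"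
    by (rule measure_run_measure_finite_horizon) (rule inv, auto)
  also have "\<dots> = measure_pmf.prob (prefix_pmf B v (t + n)) {zs. \<Phi> (\<lambda>i. drop t zs ! i)}"
  proof (rule measure_pmf_prob_cong_set_pmf)
    fix zs assume "zs \<in> set_pmf (prefix_pmf B v (t + n))"
    then have "length zs = Suc (t + n)" using set_pmf_prefix_pmfD by blast
    then have "(\<lambda>i. drop t zs ! i) = (\<lambda>i. zs ! (t + i))" by (auto simp: nth_drop)
    then show "zs \<in> {zs. \<Phi> (\<lambda>i. zs ! (t + i))} \<longleftrightarrow> zs \<in> {zs. \<Phi> (\<lambda>i. drop t zs ! i)}" by simp
  qed
  also have "\<dots> = measure_pmf.expectation (prefix_pmf B v t) (\<lambda>xs. measure_pmf.prob (prefix_pmf (start_at B (last xs)) (\<lambda>i. v (t + i)) n) {ys. \<Phi> (\<lambda>i. ys ! i)})"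
    by (rule measure_prefix_pmf_add_drop)
  also have "\<dots> = measure_pmf.expectation (prefix_pmf B v t) (\<lambda>xs. measure (run_measure (start_at B (last xs)) (\<lambda>i. v (t + i))) {r. \<Phi> r})"
  proof -
    have "measure_pmf.prob (prefix_pmf (start_at B (last xs)) (\<lambda>i. v (t + i)) n) {ys. \<Phi> (\<lambda>i. ys ! i)} =
      measure (run_measure (start_at B (last xs)) (\<lambda>i. v (t + i))) {r. \<Phi> r}" for xs
      by (rule measure_run_measure_finite_horizon[symmetric]) (rule inv)
    then show ?thesis by simp
  qed
  finally show ?thesis .
qed

lemma measure_state_pos_if_prefix:
  assumes "xs \<in> set_pmf (prefix_pmf B v t)"
  shows "0 < measure (run_measure B v) {r. r t = last xs}"
proof -
  have l: "length xs = Suc t" using set_pmf_prefix_pmfD[OF assms] by simp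
  have "measure (run_measure B v) {r. r t = last xs} = measure_pmf.prob (prefix_pmf B v t) {ys. ys ! t = last xs}"
    by (rule measure_run_measure_finite_horizon) auto
  also have "\<dots> > 0" using assms l by (intro measure_pmf_posI) (auto, subst last_conv_nth, auto)
  finally show ?thesis .
qed

lemma measure_run_measure_shift_le:
  assumes inv: "\<And>r r'. (\<And>i. i \<le> n \<Longrightarrow> r i = r' i) \<Longrightarrow> \<Phi> r = \<Phi> r'"
    and bound: "\<And>q. 0 < measure (run_measure B v) {r. r t = q} \<Longrightarrow> measure (run_measure (start_at B q) (\<lambda>i. v (t + i))) {r. \<Phi> r} \<le> \<delta>"
  shows "measure (run_measure B v) {r. \<Phi> (\<lambda>i. r (t + i))} \<le> \<delta>"
proof -
  have "measure_pmf.expectation (prefix_pmf B v t) (\<lambda>xs. measure (run_measure (start_at B (last xs)) (\<lambda>i. v (t + i))) {r. \<Phi> r}) \<le> \<delta>"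
  proof (rule measure_pmf.integral_le_const)
    show "integrable (measure_pmf (prefix_pmf B v t)) (\<lambda>xs. measure (run_measure (start_at B (last xs)) (\<lambda>i. v (t + i))) {r. \<Phi> r})"
    proof (rule measure_pmf.integrable_const_bound[where B=1])
      show "AE x in measure_pmf (prefix_pmf B v t). norm (measure (run_measure (start_at B (last x)) (\<lambda>i. v (t + i))) {r. \<Phi> r}) \<le> 1"
      proof (rule AE_pmfI)
        fix xs
        interpret prob_space "run_measure (start_at B (last xs)) (\<lambda>i. v (t + i))" by (rule prob_space_run_measure)
        show "norm (measure (run_measure (start_at B (last xs)) (\<lambda>i. v (t + i))) {r. \<Phi> r}) \<le> 1" by simp
      qed
    qed simp
    show "AE x in measure_pmf (prefix_pmf B v t). measure (run_measure (start_at B (last x)) (\<lambda>i. v (t + i))) {r. \<Phi> r} \<le> \<delta>"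
      by (rule AE_pmfI) (rule bound[OF measure_state_pos_if_prefix])
  qed
  moreover have "measure (run_measure B v) {r. \<Phi> (\<lambda>i. r (t + i))} =
    measure_pmf.expectation (prefix_pmf B v t) (\<lambda>xs. measure (run_measure (start_at B (last xs)) (\<lambda>i. v (t + i))) {r. \<Phi> r})"
    by (rule measure_run_measure_shift) (rule inv)
  ultimately show ?thesis by simp
qed

lemma AE_run_measure_start_at: "AE r in run_measure (start_at B p) w. r 0 = p"
proof -
  interpret prob_space "run_measure (start_at B p) w" by (rule prob_space_run_measure)
  have "measure (run_measure (start_at B p) w) {r. r 0 \<noteq> p} =
      measure_pmf.prob (prefix_pmf (start_at B p) w 0) {ys. ys ! 0 \<noteq> p}"
    by (rule measure_run_measure_finite_horizon) auto
  also have "\<dots> = 0" by (simp add: measure_pmf_zero_iff)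
  finally have "{r. r 0 \<noteq> p} \<in> null_sets (run_measure (start_at B p) w)"
    using finite_horizon_in_sets[of 0 "\<lambda>r. r 0 \<noteq> p"] by (simp add: emeasure_eq_measure null_sets_def)
  from AE_not_in[OF this] show ?thesis by simp
qed

lemma measure_run_measure_start_at_initial:
  assumes "{r. \<Phi> r} \<in> sets seq_space"
  shows "measure (run_measure (start_at B p) w) {r. r 0 = q \<and> \<Phi> r} =
    indicator {p} q * measure (run_measure (start_at B p) w) {r. \<Phi> r}"
proof -
  have "{r. r 0 = q \<and> \<Phi> r} = {r. r 0 = q} \<inter> {r. \<Phi> r}" by auto
  then have sets: "{r. r 0 = q \<and> \<Phi> r} \<in> sets seq_space"
    using assms finite_horizon_in_sets[of 0 "\<lambda>r. r 0 = q"] by auto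
  show ?thesis
  proof (cases "p = q")
    case True
    have "measure (run_measure (start_at B p) w) {r. r 0 = q \<and> \<Phi> r} = measure (run_measure (start_at B p) w) {r. \<Phi> r}"
      by (rule measure_eq_AE) (use AE_run_measure_start_at[where B=B and p=p and w=w] True sets assms in auto)
    then show ?thesis using True by simp
  next
    case False
    have "measure (run_measure (start_at B p) w) {r. r 0 = q \<and> \<Phi> r} = measure (run_measure (start_at B p) w) {}"
      by (rule measure_eq_AE) (use AE_run_measure_start_at[where B=B and p=p and w=w] False sets in auto)
    then show ?thesis using False by simp
  qed
qed

lemma measure_run_measure_state_shift:
  assumes inv: "\<And>r r'. (\<And>i. i \<le> n \<Longrightarrow> r i = r' i) \<Longrightarrow> \<Phi> r = \<Phi> r'"
  shows "measure (run_measure B v) {r. r t = q \<and> \<Phi> (\<lambda>i. r (t + i))} =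
    measure (run_measure B v) {r. r t = q} * measure (run_measure (start_at B q) (\<lambda>i. v (t + i))) {r. \<Phi> r}"
proof -
  let ?P = "\<lambda>p. measure (run_measure (start_at B p) (\<lambda>i. v (t + i))) {r. \<Phi> r}"
  have "measure (run_measure B v) {r. (\<lambda>r. r 0 = q \<and> \<Phi> r) (\<lambda>i. r (t + i))} =
      measure_pmf.expectation (prefix_pmf B v t)
        (\<lambda>xs. measure (run_measure (start_at B (last xs)) (\<lambda>i. v (t + i))) {r. r 0 = q \<and> \<Phi> r})"
    by (rule measure_run_measure_shift[where n=n]) (use inv in \<open>metis le0\<close>)
  also have "\<dots> = measure_pmf.expectation (prefix_pmf B v t) (\<lambda>xs. indicator {xs. last xs = q} xs * ?P q)"
  proof -
    have "measure (run_measure (start_at B p) (\<lambda>i. v (t + i))) {r. r 0 = q \<and> \<Phi> r} = indicator {p} q * ?P p" for p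
      by (rule measure_run_measure_start_at_initial) (rule finite_horizon_in_sets[OF inv])
    then show ?thesis by (intro Bochner_Integration.integral_cong) (auto simp: indicator_def)
  qed
  also have "\<dots> = measure_pmf.prob (prefix_pmf B v t) {xs. last xs = q} * ?P q" by simp
  also have "measure_pmf.prob (prefix_pmf B v t) {xs. last xs = q} = measure_pmf.prob (prefix_pmf B v t) {xs. xs ! t = q}"
  proof (rule measure_pmf_prob_cong_set_pmf)
    fix xs assume "xs \<in> set_pmf (prefix_pmf B v t)"
    then have "length xs = Suc t" by (blast dest: set_pmf_prefix_pmfD)
    then have "last xs = xs ! t" by (subst last_conv_nth) auto
    then show "xs \<in> {xs. last xs = q} \<longleftrightarrow> xs \<in> {xs. xs ! t = q}" by simp
  qed
  also have "\<dots> = measure (run_measure B v) {r. r t = q}"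
    by (rule measure_run_measure_finite_horizon[symmetric]) auto
  finally show ?thesis by simp
qed

section \<open>Running averages and the two semantics\<close>

definition psum :: "'a pwa \<Rightarrow> (nat \<Rightarrow> 'a) \<Rightarrow> (nat \<Rightarrow> nat) \<Rightarrow> nat \<Rightarrow> real" where
  "psum B w r n = (\<Sum>i<n. weight_seq B w r i)"

definition avg :: "'a pwa \<Rightarrow> (nat \<Rightarrow> 'a) \<Rightarrow> (nat \<Rightarrow> nat) \<Rightarrow> nat \<Rightarrow> real" where
  "avg B w r n = psum B w r n / real n"

lemma LimAvg_avg: "LimAvg (weight_seq B w r) = liminf (\<lambda>n. ereal (avg B w r n))"
  by (simp add: LimAvg_def avg_def psum_def)

lemma weight_seq_measurable[measurable]: "(\<lambda>r. weight_seq B w r i) \<in> borel_measurable seq_space"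
proof -
  have "(\<lambda>r. (r i, r (Suc i))) \<in> measurable seq_space (count_space UNIV)"
  proof (subst measurable_count_space_eq2_countable, safe)
    fix a b :: nat
    have "(\<lambda>r. (r i, r (Suc i))) -` {(a, b)} = {r. r i = a} \<inter> {r. r (Suc i) = b}" by auto
    also have "\<dots> \<in> sets seq_space" by measurable
    finally show "(\<lambda>r. (r i, r (Suc i))) -` {(a, b)} \<inter> space seq_space \<in> sets seq_space" by simp
  qed simp
  moreover have "(\<lambda>p. real_of_rat (pweight B (fst p) (w i) (snd p))) \<in> borel_measurable (count_space UNIV)"
    by simp
  ultimately have "(\<lambda>p. real_of_rat (pweight B (fst p) (w i) (snd p))) \<circ> (\<lambda>r. (r i, r (Suc i))) \<in> borel_measurable seq_space"
    by (rule measurable_comp)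
  then show ?thesis by (simp add: weight_seq_def comp_def)
qed

lemma psum_measurable[measurable]: "(\<lambda>r. psum B w r n) \<in> borel_measurable seq_space"
  unfolding psum_def by measurable

lemma avg_measurable[measurable]: "(\<lambda>r. avg B w r n) \<in> borel_measurable seq_space"
  unfolding avg_def psum_def by measurable

lemma LimAvg_measurable[measurable]: "(\<lambda>r. LimAvg (weight_seq B w r)) \<in> borel_measurable seq_space"
  unfolding LimAvg_avg by (intro borel_measurable_liminf) measurable

lemma sets_LimAvg_ge[measurable]: "{r. ereal \<eta> \<le> LimAvg (weight_seq B w r)} \<in> sets seq_space"
proof -
  have "{r. ereal \<eta> \<le> LimAvg (weight_seq B w r)} = {r \<in> space seq_space. ereal \<eta> \<le> LimAvg (weight_seq B w r)}"
    by simp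
  also have "\<dots> \<in> sets seq_space" by measurable
  finally show ?thesis .
qed

lemma LimAvg_ge_set_eq: "{r \<in> space (run_measure B w). LimAvg (weight_seq B w r) \<ge> ereal \<eta>} = {r. ereal \<eta> \<le> LimAvg (weight_seq B w r)}"
  by simp

lemma L_pos_le:
  assumes "\<And>\<eta>. \<eta> > c \<Longrightarrow> measure (run_measure B w) {r. ereal \<eta> \<le> LimAvg (weight_seq B w r)} = 0"
  shows "L_pos B w \<le> ereal c"
  unfolding L_pos_def LimAvg_ge_set_eq
proof (rule Sup_least)
  fix x assume "x \<in> ereal ` {\<eta>. 0 < measure (run_measure B w) {r. ereal \<eta> \<le> LimAvg (weight_seq B w r)}}"
  then obtain \<eta> where "x = ereal \<eta>" "0 < measure (run_measure B w) {r. ereal \<eta> \<le> LimAvg (weight_seq B w r)}" by auto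
  with assms[of \<eta>] show "x \<le> ereal c" by (cases "\<eta> > c") auto
qed

lemma measure_LimAvg_ge_eq_0_if_L_pos_less:
  assumes "L_pos B w < ereal \<eta>"
  shows "measure (run_measure B w) {r. ereal \<eta> \<le> LimAvg (weight_seq B w r)} = 0"
proof (rule ccontr)
  assume "measure (run_measure B w) {r. ereal \<eta> \<le> LimAvg (weight_seq B w r)} \<noteq> 0"
  then have "0 < measure (run_measure B w) {r. ereal \<eta> \<le> LimAvg (weight_seq B w r)}"
    by (simp add: less_le)
  then have "ereal \<eta> \<le> L_pos B w"
    unfolding L_pos_def LimAvg_ge_set_eq by (intro Sup_upper) auto
  with assms show False by simp
qed

lemma L_as_ge:
  assumes "measure (run_measure B w) {r. ereal \<eta> \<le> LimAvg (weight_seq B w r)} = 1"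
  shows "ereal \<eta> \<le> L_as B w"
  unfolding L_as_def LimAvg_ge_set_eq using assms by (intro Sup_upper) auto

lemma L_as_le:
  assumes "\<And>\<eta>. \<eta> > c \<Longrightarrow> measure (run_measure B w) {r. ereal \<eta> \<le> LimAvg (weight_seq B w r)} \<noteq> 1"
  shows "L_as B w \<le> ereal c"
  unfolding L_as_def LimAvg_ge_set_eq
proof (rule Sup_least)
  fix x assume "x \<in> ereal ` {\<eta>. measure (run_measure B w) {r. ereal \<eta> \<le> LimAvg (weight_seq B w r)} = 1}"
  then obtain \<eta> where "x = ereal \<eta>" "measure (run_measure B w) {r. ereal \<eta> \<le> LimAvg (weight_seq B w r)} = 1" by auto
  with assms[of \<eta>] show "x \<le> ereal c" by (cases "\<eta> > c") auto
qed

lemma measure_LimAvg_ge_eq_1_if_L_as_greater: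
  assumes "ereal \<eta> < L_as B w"
  shows "measure (run_measure B w) {r. ereal \<eta> \<le> LimAvg (weight_seq B w r)} = 1"
proof -
  interpret prob_space "run_measure B w" by (rule prob_space_run_measure)
  from assms obtain x where x: "x \<in> ereal ` {\<eta>. measure (run_measure B w) {r. ereal \<eta> \<le> LimAvg (weight_seq B w r)} = 1}"
    and lt: "ereal \<eta> < x"
    unfolding L_as_def LimAvg_ge_set_eq less_Sup_iff by blast
  then obtain \<eta>' where x': "x = ereal \<eta>'" and m: "measure (run_measure B w) {r. ereal \<eta>' \<le> LimAvg (weight_seq B w r)} = 1"
    by auto
  have le: "ereal \<eta> \<le> ereal \<eta>'" using lt x' by simp
  have "{r. ereal \<eta>' \<le> LimAvg (weight_seq B w r)} \<subseteq> {r. ereal \<eta> \<le> LimAvg (weight_seq B w r)}"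
  proof
    fix r assume "r \<in> {r. ereal \<eta>' \<le> LimAvg (weight_seq B w r)}"
    then have "ereal \<eta>' \<le> LimAvg (weight_seq B w r)" by (rule CollectD)
    from order.trans[OF le this] show "r \<in> {r. ereal \<eta> \<le> LimAvg (weight_seq B w r)}" by simp
  qed
  then have "measure (run_measure B w) {r. ereal \<eta>' \<le> LimAvg (weight_seq B w r)} \<le> measure (run_measure B w) {r. ereal \<eta> \<le> LimAvg (weight_seq B w r)}"
    by (intro finite_measure_mono) auto
  then show ?thesis using m prob_le_1[of "{r. ereal \<eta> \<le> LimAvg (weight_seq B w r)}"] by simp
qed

lemma one_minus_ereal[simp]: "1 - ereal x = ereal (1 - x)"
  by (simp add: one_ereal_def)

lemma liminf_le_if_frequently_le:
  fixes X :: "nat \<Rightarrow> ereal"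
  assumes "\<And>N. \<exists>n\<ge>N. X n \<le> c"
  shows "liminf X \<le> c"
proof (rule ccontr)
  assume "\<not> liminf X \<le> c"
  then have "c < liminf X" by simp
  then have "eventually (\<lambda>n. c < X n) sequentially"
    using le_Liminf_iff[of "liminf X" sequentially X] by auto
  then obtain N where "\<And>n. n \<ge> N \<Longrightarrow> c < X n" by (auto simp: eventually_sequentially)
  with assms[of N] show False by force
qed

lemma frequently_less_if_liminf_less:
  fixes X :: "nat \<Rightarrow> ereal"
  assumes "liminf X < c"
  shows "\<exists>n\<ge>N. X n < c"
proof (rule ccontr)
  assume "\<not> (\<exists>n\<ge>N. X n < c)"
  then have "eventually (\<lambda>n. c \<le> X n) sequentially" by (auto simp: eventually_sequentially not_less)
  then have "c \<le> liminf X" by (rule Liminf_bounded)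
  with assms show False by simp
qed

lemma eventually_greater_if_liminf_greater:
  fixes X :: "nat \<Rightarrow> ereal"
  assumes "y < liminf X"
  shows "\<exists>N. \<forall>n\<ge>N. y < X n"
  using assms le_Liminf_iff[of "liminf X" sequentially X] by (auto simp: eventually_sequentially)

lemma LimAvg_zero: "(\<And>i. x i = 0) \<Longrightarrow> LimAvg x = 0"
  by (simp add: LimAvg_def zero_ereal_def[symmetric] Liminf_const)

lemma LimAvg_nonneg: "(\<And>i. 0 \<le> x i) \<Longrightarrow> 0 \<le> LimAvg x"
  unfolding LimAvg_def by (intro Liminf_bounded) (auto intro!: always_eventually divide_nonneg_nonneg sum_nonneg)

lemma LimAvg_le_one: "(\<And>i. x i \<le> 1) \<Longrightarrow> LimAvg x \<le> 1"
  unfolding LimAvg_def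
proof (intro Liminf_le)
  assume h: "\<And>i. x i \<le> 1"
  show "\<forall>\<^sub>F n in sequentially. ereal ((\<Sum>i<n. x i) / real n) \<le> 1"
  proof (intro always_eventually allI)
    fix n
    have "(\<Sum>i<n. x i) \<le> (\<Sum>i<n. 1)" using h by (intro sum_mono) auto
    then show "ereal ((\<Sum>i<n. x i) / real n) \<le> 1" by (cases "n = 0") (auto simp: field_simps)
  qed
qed simp

lemma LimAvg_ge_if_eventually_one:
  assumes "\<And>i. i \<ge> j \<Longrightarrow> x i = 1" "\<And>i. 0 \<le> x i" "\<eta> < 1"
  shows "ereal \<eta> \<le> LimAvg x"
  unfolding LimAvg_def
proof (rule Liminf_bounded, unfold eventually_sequentially)
  obtain n0 :: nat where n0: "real j / (1 - \<eta>) < real n0" using reals_Archimedean2 by blast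
  show "\<exists>N. \<forall>n\<ge>N. ereal \<eta> \<le> ereal ((\<Sum>i<n. x i) / real n)"
  proof (intro exI[of _ "max n0 (Suc j)"] allI impI)
    fix n assume n: "max n0 (Suc j) \<le> n"
    have "real n - real j \<le> (\<Sum>i<n. x i)"
    proof -
      have "real n - real j = (\<Sum>i\<in>{j..<n}. 1)" using n by simp
      also have "\<dots> = (\<Sum>i\<in>{j..<n}. x i)" using assms(1) by (intro sum.cong) auto
      also have "\<dots> \<le> (\<Sum>i<n. x i)" using assms(2) by (intro sum_mono2) auto
      finally show ?thesis .
    qed
    moreover have "\<eta> * real n \<le> real n - real j"
    proof -
      have "real j < (1 - \<eta>) * real n0" using n0 assms(3) by (simp add: field_simps)
      also have "\<dots> \<le> (1 - \<eta>) * real n" using n assms(3) by (intro mult_left_mono) auto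
      finally show ?thesis by (simp add: algebra_simps)
    qed
    moreover have "real n > 0" using n by simp
    ultimately show "ereal \<eta> \<le> ereal ((\<Sum>i<n. x i) / real n)" by (simp add: field_simps)
  qed
qed

lemma half_le_liminf:
  fixes X :: "nat \<Rightarrow> real"
  assumes "\<And>\<epsilon>. \<epsilon> > 0 \<Longrightarrow> \<exists>N. \<forall>m\<ge>N. 1/2 - \<epsilon> \<le> X m"
  shows "ereal (1/2) \<le> liminf (\<lambda>m. ereal (X m))"
proof (subst le_Liminf_iff, intro allI impI)
  fix y :: ereal assume y: "y < ereal (1/2)"
  show "\<forall>\<^sub>F m in sequentially. y < ereal (X m)"
  proof (cases y)
    case (real y')
    then have "y' < 1/2" using y by simp
    then obtain N where N: "\<forall>m\<ge>N. 1/2 - (1/2 - y')/2 \<le> X m" using assms[of "(1/2 - y')/2"] by auto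
    show ?thesis unfolding eventually_sequentially
    proof (intro exI[of _ N] allI impI)
      fix m assume "m \<ge> N"
      then have "1/2 - (1/2 - y')/2 \<le> X m" using N by blast
      then have "y' < X m" using \<open>y' < 1/2\<close> by (simp add: field_simps)
      then show "y < ereal (X m)" using real by simp
    qed
  next
    case MInf then show ?thesis by simp
  next
    case PInf then show ?thesis using y by simp
  qed
qed

lemma block_index_exists:
  fixes t :: "nat \<Rightarrow> nat"
  assumes tmono: "\<And>k. t k < t (Suc k)" and m: "t k0 \<le> m"
  shows "\<exists>k\<ge>k0. t k \<le> m \<and> m < t (Suc k)"
proof -
  have tge: "t k \<ge> k" for k by (induction k) (auto intro: Suc_leI le_less_trans[OF _ tmono])
  have ex: "\<exists>k. m < t k" using tge[of "Suc m"] by (intro exI[of _ "Suc m"]) simp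
  define k' where "k' = (LEAST k. m < t k)"
  have k': "m < t k'" unfolding k'_def using LeastI_ex[OF ex] .
  have mono: "i \<le> j \<Longrightarrow> t i \<le> t j" for i j
    by (induction j rule: dec_induct) (auto intro: order.trans less_imp_le[OF tmono])
  have "k' > k0"
  proof (rule ccontr)
    assume "\<not> k' > k0"
    then have "t k' \<le> t k0" using mono by simp
    with k' m show False by simp
  qed
  then obtain k where k: "k' = Suc k" "k \<ge> k0" by (cases k') auto
  have "\<not> m < t k" using not_less_Least[of k "\<lambda>k. m < t k"] k unfolding k'_def by simp
  then show ?thesis using k k' by (intro exI[of _ k]) auto
qed

lemma block_sums_lower_bound:
  fixes x :: "nat \<Rightarrow> real" and t n C :: "nat \<Rightarrow> nat" and W K :: nat
  assumes tS: "\<And>k. t (Suc k) = t k + n k + 1"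
    and xb: "\<And>i. \<bar>x i\<bar> \<le> real W"
    and good: "\<And>k s. k \<ge> K \<Longrightarrow> s \<le> n k \<Longrightarrow> real s / 2 - real (C k) \<le> (\<Sum>i<t k + s. x i) - (\<Sum>i<t k. x i)"
    and "K \<le> k" "s \<le> n k"
  shows "(real (t k + s) - real (t K)) / 2 - (\<Sum>j\<le>k. real (C j + W + 1)) \<le> (\<Sum>i<t k + s. x i) - (\<Sum>i<t K. x i)"
proof -
  define S where "S m = (\<Sum>i<m. x i)" for m
  have block_starts: "(real (t k) - real (t K)) / 2 - (\<Sum>j\<in>{K..<k}. real (C j + W + 1)) \<le> S (t k) - S (t K)"
    if "K \<le> k" for k
    using that
  proof (induction k rule: dec_induct)
    case (step k)
    have g: "real (n k) / 2 - real (C k) \<le> S (t k + n k) - S (t k)"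
      using good[OF step(1) order_refl] by (simp add: S_def)
    have x: "S (t (Suc k)) = S (t k + n k) + x (t k + n k)" by (simp add: S_def tS)
    have xl: "x (t k + n k) \<ge> - real W" using xb[of "t k + n k"] by linarith
    have sum: "(\<Sum>j\<in>{K..<Suc k}. real (C j + W + 1)) = (\<Sum>j\<in>{K..<k}. real (C j + W + 1)) + real (C k + W + 1)"
      using step(1) by (simp add: sum.atLeastLessThan_Suc)
    show ?case using step(3) g x xl sum tS[of k] by (simp add: field_simps)
  qed simp
  have g: "real s / 2 - real (C k) \<le> S (t k + s) - S (t k)"
    using good[OF assms(4,5)] by (simp add: S_def)
  have "(\<Sum>j\<in>{K..<k}. real (C j + W + 1)) + real (C k) \<le> (\<Sum>j\<in>{K..<Suc k}. real (C j + W + 1))"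
    using assms(4) by (simp add: sum.atLeastLessThan_Suc)
  also have "\<dots> \<le> (\<Sum>j\<le>k. real (C j + W + 1))" by (intro sum_mono2) auto
  finally show ?thesis using block_starts[OF assms(4)] g by (simp add: S_def field_simps)
qed

lemma block_sums_lower_bound_at:
  fixes x :: "nat \<Rightarrow> real" and t n C :: "nat \<Rightarrow> nat" and W K :: nat
  assumes tS: "\<And>k. t (Suc k) = t k + n k + 1"
    and nD: "\<And>k. real (n k) \<ge> real (k + 2) * (\<Sum>j\<le>Suc k. real (C j + W + 1))"
    and xb: "\<And>i. \<bar>x i\<bar> \<le> real W"
    and good: "\<And>k s. k \<ge> K \<Longrightarrow> s \<le> n k \<Longrightarrow> real s / 2 - real (C k) \<le> (\<Sum>i<t k + s. x i) - (\<Sum>i<t k. x i)"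
    and "t k0 \<le> m" "K \<le> k0" "1 \<le> k0"
  obtains k where "k0 \<le> k"
    "(real m - real (t K)) / 2 - real m / real (k + 1) \<le> (\<Sum>i<m. x i) - (\<Sum>i<t K. x i)"
proof -
  define D where "D k = (\<Sum>j\<le>k. real (C j + W + 1))" for k
  have "t k < t (Suc k)" for k using tS by simp
  from block_index_exists[OF this \<open>t k0 \<le> m\<close>] obtain k where k: "k \<ge> k0" "t k \<le> m" "m < t (Suc k)"
    by blast
  then obtain k' where k': "k = Suc k'" using \<open>1 \<le> k0\<close> by (cases k) auto
  have "real (k + 1) * D k \<le> real (t k)"
  proof -
    have "real (k + 1) * D k = real (k' + 2) * D (Suc k')" using k' by simp
    also have "\<dots> \<le> real (n k')" using nD[of k'] by (simp add: D_def)
    also have "\<dots> \<le> real (t k)" using tS[of k'] k' by simp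
    finally show ?thesis .
  qed
  then have "D k \<le> real m / real (k + 1)"
    using k(2) by (simp add: field_simps)
  moreover have "(real (t k + (m - t k)) - real (t K)) / 2 - D k \<le> (\<Sum>i<t k + (m - t k). x i) - (\<Sum>i<t K. x i)"
    unfolding D_def using k tS[of k] \<open>K \<le> k0\<close>
    by (intro block_sums_lower_bound[where t=t and n=n and C=C, OF tS xb good]) auto
  ultimately show thesis using k by (intro that[of k]) auto
qed

lemma half_le_liminf_avg_of_block_bounds:
  fixes x :: "nat \<Rightarrow> real" and t n C :: "nat \<Rightarrow> nat" and W K :: nat
  assumes tS: "\<And>k. t (Suc k) = t k + n k + 1"
    and nD: "\<And>k. real (n k) \<ge> real (k + 2) * (\<Sum>j\<le>Suc k. real (C j + W + 1))"
    and xb: "\<And>i. \<bar>x i\<bar> \<le> real W"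
    and good: "\<And>k s. k \<ge> K \<Longrightarrow> s \<le> n k \<Longrightarrow> real s / 2 - real (C k) \<le> (\<Sum>i<t k + s. x i) - (\<Sum>i<t k. x i)"
  shows "ereal (1/2) \<le> liminf (\<lambda>m. ereal ((\<Sum>i<m. x i) / real m))"
proof (rule half_le_liminf)
  fix \<epsilon> :: real assume "\<epsilon> > 0"
  define c where "c = \<bar>\<Sum>i<t K. x i\<bar> + real (t K)"
  obtain k1 :: nat where k1: "2 / \<epsilon> < real k1" using reals_Archimedean2 by blast
  define k0 where "k0 = max k1 (max K 1)"
  obtain M1 :: nat where M1: "2 * c / \<epsilon> < real M1" using reals_Archimedean2 by blast
  show "\<exists>N. \<forall>m\<ge>N. 1/2 - \<epsilon> \<le> (\<Sum>i<m. x i) / real m"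
  proof (intro exI[of _ "max (t k0) (max M1 1)"] allI impI)
    fix m assume m: "max (t k0) (max M1 1) \<le> m"
    then have "t k0 \<le> m" "0 < real m" "real M1 \<le> real m" by auto
    obtain k where k: "k0 \<le> k"
      and H1: "(real m - real (t K)) / 2 - real m / real (k + 1) \<le> (\<Sum>i<m. x i) - (\<Sum>i<t K. x i)"
      by (rule block_sums_lower_bound_at[OF tS nD xb good \<open>t k0 \<le> m\<close>]) (auto simp: k0_def)
    have "2 / \<epsilon> < real (k + 1)" using k1 k by (simp add: k0_def)
    then have "1 / real (k + 1) \<le> \<epsilon> / 2" using \<open>\<epsilon> > 0\<close> by (simp add: field_simps)
    then have H2: "real m / real (k + 1) \<le> \<epsilon> * real m / 2"
      using mult_left_mono[of "1 / real (k + 1)" "\<epsilon> / 2" "real m"] \<open>0 < real m\<close> by (simp add: mult.commute)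
    have "2 * c / \<epsilon> < real m" using M1 \<open>real M1 \<le> real m\<close> by linarith
    then have H3: "c \<le> \<epsilon> * real m / 2" using \<open>\<epsilon> > 0\<close> by (simp add: field_simps)
    have H4: "- c \<le> (\<Sum>i<t K. x i) - real (t K) / 2" unfolding c_def by simp
    from H1 H2 H3 H4 have "real m / 2 - \<epsilon> * real m \<le> (\<Sum>i<m. x i)" by argo
    then have "(1/2 - \<epsilon>) * real m \<le> (\<Sum>i<m. x i)" by (simp add: algebra_simps)
    then show "1/2 - \<epsilon> \<le> (\<Sum>i<m. x i) / real m" using \<open>0 < real m\<close> by (simp add: pos_le_divide_eq)
  qed
qed

lemma avg_cong_run:
  assumes "\<And>i. i \<le> n \<Longrightarrow> r i = r' i" "s \<le> n"
  shows "avg B v r s = avg B v r' s"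
  unfolding avg_def psum_def weight_seq_def using assms by (intro arg_cong2[where f="(/)"] sum.cong) auto

lemma avg_cong_word:
  assumes "\<And>i. i < n \<Longrightarrow> v i = v' i" "s \<le> n"
  shows "avg B v r s = avg B v' r s"
  unfolding avg_def psum_def weight_seq_def using assms by (intro arg_cong2[where f="(/)"] sum.cong) auto

lemma psum_cong_run: "(\<And>i. i \<le> n \<Longrightarrow> r i = r' i) \<Longrightarrow> s \<le> n \<Longrightarrow> psum B v r s = psum B v r' s"
  unfolding psum_def weight_seq_def by (intro sum.cong) auto

lemma psum_cong_word: "(\<And>i. i < n \<Longrightarrow> v i = v' i) \<Longrightarrow> s \<le> n \<Longrightarrow> psum B v r s = psum B v' r s"
  unfolding psum_def weight_seq_def by (intro sum.cong) auto

lemma psum_shift: "psum B v r (t + s) - psum B v r t = psum B (\<lambda>i. v (t + i)) (\<lambda>i. r (t + i)) s"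
proof (induction s)
  case 0 then show ?case by (simp add: psum_def)
next
  case (Suc s)
  have "psum B v r (t + Suc s) = psum B v r (t + s) + weight_seq B v r (t + s)"
    by (simp add: psum_def)
  moreover have "psum B (\<lambda>i. v (t + i)) (\<lambda>i. r (t + i)) (Suc s) =
      psum B (\<lambda>i. v (t + i)) (\<lambda>i. r (t + i)) s + weight_seq B v r (t + s)"
    by (simp add: psum_def weight_seq_def)
  ultimately show ?case using Suc by simp
qed

lemma neg_sum_abs_le: "(s::nat) < K \<Longrightarrow> - (\<Sum>s'<K. \<bar>f s'\<bar>) \<le> (f s :: real)"
proof -
  assume "s < K"
  then have "\<bar>f s\<bar> \<le> (\<Sum>s'<K. \<bar>f s'\<bar>)" by (intro member_le_sum) auto
  then show ?thesis by linarith
qed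

lemma linear_lower_bound_if_LimAvg_ge:
  assumes "ereal (3/4) \<le> LimAvg (weight_seq B v r)"
  shows "\<exists>C::nat. \<forall>s. real s / 2 - real C \<le> psum B v r (t + s) - psum B v r t"
proof -
  have a: "ereal (3/4) \<le> liminf (\<lambda>n. ereal (avg B v r n))" using assms by (simp add: LimAvg_avg)
  have "ereal (5/8) < ereal (3/4)" by simp
  then have "ereal (5/8) < liminf (\<lambda>n. ereal (avg B v r n))" using a by (rule less_le_trans)
  from eventually_greater_if_liminf_greater[OF this] obtain K where K: "\<forall>m\<ge>K. 5/8 < avg B v r m" by auto
  define K' where "K' = max K 1"
  define f where "f s = psum B v r (t + s) - psum B v r t - real s / 2" for s
  define C :: nat where "C = nat \<lceil>\<bar>psum B v r t\<bar> + (\<Sum>s'<K'. \<bar>f s'\<bar>)\<rceil>"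
  have Cge: "\<bar>psum B v r t\<bar> + (\<Sum>s'<K'. \<bar>f s'\<bar>) \<le> real C"
    unfolding C_def by linarith
  have "- real C \<le> f s" for s
  proof (cases "s < K'")
    case True
    then show ?thesis using neg_sum_abs_le[OF True, of f] Cge by linarith
  next
    case False
    then have m: "t + s \<ge> K" "t + s \<ge> 1" by (auto simp: K'_def)
    have "5/8 < avg B v r (t + s)" using K m(1) by blast
    then have "5/8 < psum B v r (t + s) / real (t + s)" by (simp add: avg_def)
    then have "5/8 * real (t + s) < psum B v r (t + s)" using m(2) by (simp add: field_simps)
    then have "real s / 2 \<le> psum B v r (t + s)" by simp
    then have "- \<bar>psum B v r t\<bar> \<le> f s" unfolding f_def by linarith
    moreover have "0 \<le> (\<Sum>s'<K'. \<bar>f s'\<bar>)" by (intro sum_nonneg) auto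
    ultimately show ?thesis using Cge by linarith
  qed
  then show ?thesis unfolding f_def by (intro exI[of _ C]) (auto simp: algebra_simps)
qed

section \<open>PosLimAvg is not closed under complement\<close>

definition letter_pwa :: "nat pwa" where
  "letter_pwa = \<lparr>pstates = {0}, pinit = return_pmf 0, ptrans = (\<lambda>_ _. return_pmf 0), pweight = (\<lambda>_ \<sigma> _. of_nat \<sigma>)\<rparr>"

lemma wf_letter_pwa: "wf_pwa {0,1} letter_pwa"
  by (simp add: wf_pwa_def letter_pwa_def)

lemma weight_seq_letter_pwa: "weight_seq letter_pwa w r i = real (w i)"
  by (simp add: weight_seq_def letter_pwa_def)

definition letter_avg :: "(nat \<Rightarrow> nat) \<Rightarrow> nat \<Rightarrow> real" where
  "letter_avg w n = (\<Sum>i<n. real (w i)) / real n"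

lemma LimAvg_letter_pwa: "LimAvg (weight_seq letter_pwa w r) = liminf (\<lambda>n. ereal (letter_avg w n))"
  by (simp add: LimAvg_def weight_seq_letter_pwa letter_avg_def)

lemma letter_avg_bounds: "w \<in> words {0,1} \<Longrightarrow> 0 \<le> letter_avg w n \<and> letter_avg w n \<le> 1"
proof -
  assume w: "w \<in> words {0,1}"
  have le: "(\<Sum>i<n. real (w i)) \<le> real n"
  proof -
    have wi: "w i \<le> 1" for i
    proof -
      have "w i \<in> {0,1}" using w by (simp add: words_def)
      then show ?thesis by auto
    qed
    have "(\<Sum>i<n. real (w i)) \<le> (\<Sum>i<n. 1)"
      using wi by (intro sum_mono) auto
    then show ?thesis by simp
  qed
  show ?thesis
    using le by (cases "n = 0") (auto simp: letter_avg_def intro!: sum_nonneg divide_nonneg_nonneg)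
qed

lemma liminf_letter_avg_real:
  assumes "w \<in> words {0,1}"
  shows "\<exists>x. liminf (\<lambda>n. ereal (letter_avg w n)) = ereal x \<and> 0 \<le> x \<and> x \<le> 1"
proof -
  have lo: "0 \<le> liminf (\<lambda>n. ereal (letter_avg w n))"
    using letter_avg_bounds[OF assms] by (intro Liminf_bounded) auto
  have hi: "liminf (\<lambda>n. ereal (letter_avg w n)) \<le> 1"
    using letter_avg_bounds[OF assms] by (intro Liminf_le) auto
  from lo hi show ?thesis
    by (cases "liminf (\<lambda>n. ereal (letter_avg w n))") auto
qed

lemma L_letter_pwa:
  assumes "w \<in> words {0,1}"
  shows "L_pos letter_pwa w = liminf (\<lambda>n. ereal (letter_avg w n))" "L_as letter_pwa w = liminf (\<lambda>n. ereal (letter_avg w n))"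
proof -
  interpret prob_space "run_measure letter_pwa w" by (rule prob_space_run_measure)
  obtain x where x: "liminf (\<lambda>n. ereal (letter_avg w n)) = ereal x" using liminf_letter_avg_real[OF assms] by blast
  have m: "measure (run_measure letter_pwa w) {r \<in> space (run_measure letter_pwa w). LimAvg (weight_seq letter_pwa w r) \<ge> ereal \<eta>}
     = (if \<eta> \<le> x then 1 else 0)" for \<eta>
    using prob_space by (auto simp: LimAvg_letter_pwa x)
  have e: "ereal ` {\<eta>. \<eta> \<le> x} = {y. \<exists>\<eta>. y = ereal \<eta> \<and> \<eta> \<le> x}" by auto
  have S: "Sup (ereal ` {\<eta>. \<eta> \<le> x}) = ereal x"
    by (rule antisym) (auto intro: Sup_least Sup_upper)
  show "L_pos letter_pwa w = liminf (\<lambda>n. ereal (letter_avg w n))"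
    unfolding L_pos_def m x using S by (simp cong: rev_conj_cong)
  show "L_as letter_pwa w = liminf (\<lambda>n. ereal (letter_avg w n))"
    unfolding L_as_def m x using S by simp
qed

definition dip_event :: "'a pwa \<Rightarrow> (nat \<Rightarrow> 'a) \<Rightarrow> real \<Rightarrow> nat \<Rightarrow> nat \<Rightarrow> (nat \<Rightarrow> nat) set" where
  "dip_event B w c t N = {r. \<exists>s\<in>{t..N}. avg B w r s < c}"

lemma sets_dip_event[measurable]: "dip_event B w c t N \<in> sets seq_space"
proof -
  have "dip_event B w c t N = {r \<in> space seq_space. \<exists>s\<in>{t..N}. avg B w r s < c}"
    by (simp add: dip_event_def)
  also have "\<dots> \<in> sets seq_space" by measurable
  finally show ?thesis .
qed

lemma measure_dip_event_cong_word:
  assumes "\<And>i. i < N \<Longrightarrow> v i = w i"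
  shows "measure (run_measure B v) (dip_event B v c t N) = measure (run_measure B w) (dip_event B w c t N)"
proof -
  have "dip_event B v c t N = dip_event B w c t N"
    using avg_cong_word[of N v w] assms by (auto simp: dip_event_def)
  moreover have "measure (run_measure B v) (dip_event B w c t N) = measure (run_measure B w) (dip_event B w c t N)"
    unfolding dip_event_def
  proof (rule measure_run_measure_cong_word)
    show "v i = w i" if "i < N" for i using assms that .
    fix r r' :: "nat \<Rightarrow> nat" assume "\<And>i. i \<le> N \<Longrightarrow> r i = r' i"
    then have "avg B w r s = avg B w r' s" if "s \<le> N" for s
      by (rule avg_cong_run[OF _ that])
    then show "(\<exists>s\<in>{t..N}. avg B w r s < c) = (\<exists>s\<in>{t..N}. avg B w r' s < c)" by auto
  qed
  ultimately show ?thesis by simp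
qed

lemma dip_event_likely_if_LimAvg_ge_null:
  assumes null: "measure (run_measure B v) {r. ereal c \<le> LimAvg (weight_seq B v r)} = 0" and "\<delta> > 0"
  shows "\<exists>N\<ge>T. 1 - \<delta> \<le> measure (run_measure B v) (dip_event B v c T N)"
proof -
  interpret prob_space "run_measure B v" by (rule prob_space_run_measure)
  define S where "S N = dip_event B v c T (T + N)" for N
  have S_sets: "S N \<in> sets (run_measure B v)" for N by (simp add: S_def)
  have "incseq S" unfolding S_def dip_event_def incseq_def by fastforce
  then have lim: "(\<lambda>N. measure (run_measure B v) (S N)) \<longlonglongrightarrow> measure (run_measure B v) (\<Union>N. S N)"
    by (intro Lim_measure_incseq) (use S_sets in auto)
  have "UNIV - {r. ereal c \<le> LimAvg (weight_seq B v r)} \<subseteq> (\<Union>N. S N)"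
  proof
    fix r assume "r \<in> UNIV - {r. ereal c \<le> LimAvg (weight_seq B v r)}"
    then have "liminf (\<lambda>n. ereal (avg B v r n)) < ereal c" by (simp add: LimAvg_avg not_le)
    from frequently_less_if_liminf_less[OF this, of T] obtain s where "s \<ge> T" "avg B v r s < c" by auto
    then have "r \<in> S (s - T)" unfolding S_def dip_event_def by (intro CollectI bexI[of _ s]) auto
    then show "r \<in> (\<Union>N. S N)" by blast
  qed
  then have "measure (run_measure B v) (UNIV - {r. ereal c \<le> LimAvg (weight_seq B v r)}) \<le> measure (run_measure B v) (\<Union>N. S N)"
    using S_sets by (intro finite_measure_mono) auto
  then have "1 \<le> measure (run_measure B v) (\<Union>N. S N)"
    using prob_compl[of "{r. ereal c \<le> LimAvg (weight_seq B v r)}"] null by simp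
  from order_tendstoD(1)[OF lim, of "1 - \<delta>"] this \<open>\<delta> > 0\<close> obtain N where "1 - \<delta> < measure (run_measure B v) (S N)"
    by (auto simp: eventually_sequentially)
  then show ?thesis unfolding S_def by (intro exI[of _ "T + N"]) auto
qed

lemma L_pos_le_if_dip_events_likely:
  assumes dips: "\<And>K \<delta>. 0 < \<delta> \<Longrightarrow> \<exists>t N. K \<le> t \<and> 1 - \<delta> \<le> measure (run_measure B w) (dip_event B w c t N)"
  shows "L_pos B w \<le> ereal c"
proof -
  interpret prob_space "run_measure B w" by (rule prob_space_run_measure)
  define G where "G K = {r. \<forall>s\<ge>K. c \<le> avg B w r s}" for K
  have G_sets: "G K \<in> sets (run_measure B w)" for K
  proof -
    have "G K = (\<Inter>s\<in>{K..}. {r \<in> space seq_space. c \<le> avg B w r s})" by (auto simp: G_def)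
    also have "\<dots> \<in> sets seq_space"
    proof -
      have "{r \<in> space seq_space. c \<le> avg B w r s} \<in> sets seq_space" for s by measurable
      then show ?thesis by (intro sets.countable_INT') auto
    qed
    finally show ?thesis by simp
  qed
  have G_null: "measure (run_measure B w) (G K) = 0" for K
  proof -
    have "measure (run_measure B w) (G K) \<le> 0 + \<delta>" if \<delta>: "0 < \<delta>" for \<delta>
    proof -
      obtain t N where t: "K \<le> t" and N: "1 - \<delta> \<le> measure (run_measure B w) (dip_event B w c t N)"
        using dips[OF \<delta>] by blast
      have "G K \<subseteq> space (run_measure B w) - dip_event B w c t N"
        using t by (auto simp: G_def dip_event_def) (meson le_trans not_less)
      then have "measure (run_measure B w) (G K) \<le> measure (run_measure B w) (space (run_measure B w) - dip_event B w c t N)"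
        using sets.compl_sets[of "dip_event B w c t N" "run_measure B w"] by (intro finite_measure_mono) auto
      also have "\<dots> = 1 - measure (run_measure B w) (dip_event B w c t N)"
        by (intro prob_compl) simp
      finally show ?thesis using N by simp
    qed
    then have "measure (run_measure B w) (G K) \<le> 0" by (rule field_le_epsilon)
    then show ?thesis by (simp add: measure_le_0_iff)
  qed
  show ?thesis
  proof (rule L_pos_le)
    fix \<eta> :: real assume "c < \<eta>"
    have sub: "{r. ereal \<eta> \<le> LimAvg (weight_seq B w r)} \<subseteq> (\<Union>K. G K)"
    proof
      fix r assume "r \<in> {r. ereal \<eta> \<le> LimAvg (weight_seq B w r)}"
      then have "ereal c < liminf (\<lambda>n. ereal (avg B w r n))"
        using \<open>c < \<eta>\<close> by (auto simp: LimAvg_avg intro: less_le_trans[of "ereal c" "ereal \<eta>"])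
      from eventually_greater_if_liminf_greater[OF this] obtain K where "\<forall>n\<ge>K. ereal c < ereal (avg B w r n)"
        by blast
      then have "r \<in> G K" unfolding G_def by (auto intro: less_imp_le)
      then show "r \<in> (\<Union>K. G K)" by blast
    qed
    have "(\<Union>K. G K) \<in> null_sets (run_measure B w)"
      using G_null G_sets by (intro null_sets_UN) (auto simp: emeasure_eq_measure)
    then have "{r. ereal \<eta> \<le> LimAvg (weight_seq B w r)} \<in> null_sets (run_measure B w)"
      using null_sets_subset[OF _ _ sub] by simp
    then show "measure (run_measure B w) {r. ereal \<eta> \<le> LimAvg (weight_seq B w r)} = 0"
      by (simp add: null_sets_def emeasure_eq_measure)
  qed
qed

lemma letter_avg_le_quarter_if_zero_block:
  assumes w: "w \<in> words {0,1}" and zeros: "\<And>i. N \<le> i \<Longrightarrow> i < 4 * N \<Longrightarrow> w i = 0" and "0 < N"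
  shows "letter_avg w (4 * N) \<le> 1/4"
proof -
  have "(\<Sum>i<4 * N. real (w i)) = (\<Sum>i<N. real (w i)) + (\<Sum>i\<in>{N..<4 * N}. real (w i))"
    by (subst sum.atLeastLessThan_concat[of 0 N "4 * N", symmetric, simplified lessThan_atLeast0[symmetric]])
      (auto simp: lessThan_atLeast0)
  also have "(\<Sum>i\<in>{N..<4 * N}. real (w i)) = 0" using zeros by (intro sum.neutral) auto
  also have "(\<Sum>i<N. real (w i)) \<le> (\<Sum>i<N. 1)"
  proof (intro sum_mono)
    fix i show "real (w i) \<le> 1" using w by (auto simp: words_def dest: spec[of _ i])
  qed
  finally show ?thesis using \<open>0 < N\<close> by (simp add: letter_avg_def field_simps)
qed

text \<open>The adversarial word is built in rounds: round k keeps a prefix of the current word,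
  appends a block of zeros three times as long (which pulls the letter average down to 1/4),
  and then continues with ones, so that the hypothesis applies again in the next round.\<close>

lemma diagonal_word_exists:
  fixes P :: "nat \<Rightarrow> (nat \<Rightarrow> nat) \<Rightarrow> nat \<Rightarrow> nat \<Rightarrow> bool"
  assumes P: "\<And>k v t. v \<in> words {0,1} \<Longrightarrow> \<forall>i\<ge>t. v i = 1 \<Longrightarrow> \<exists>N\<ge>t. P k v t N"
  obtains w where "w \<in> words {0,1}" "\<forall>K. \<exists>n\<ge>K. letter_avg w n \<le> 1/4"
    and "\<forall>k. \<exists>v t N. Suc k \<le> t \<and> P k v t N \<and> (\<forall>i<N. v i = w i)"
proof -
  define Nsel where "Nsel k v t = (SOME N. N \<ge> t \<and> P k v t N)" for k v t
  have Nsel: "Nsel k v t \<ge> t \<and> P k v t (Nsel k v t)" if "v \<in> words {0,1}" "\<forall>i\<ge>t. v i = 1" for k v t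
    using P[OF that, of k] unfolding Nsel_def by (rule someI_ex)
  define step where "step k p = (let N = Nsel k (fst p) (snd p)
      in ((\<lambda>i. if i < N then fst p i else if i < 4 * N then 0 else 1), 4 * N))"
    for k :: nat and p :: "(nat \<Rightarrow> nat) \<times> nat"
  obtain st where st_0: "st 0 = ((\<lambda>_::nat. 1::nat), 1::nat)" and st_Suc: "\<And>k. st (Suc k) = step k (st k)"
  proof -
    show ?thesis by (rule that[of "rec_nat ((\<lambda>_. 1), 1) step"]) simp_all
  qed
  define vk where "vk k = fst (st k)" for k
  define tk where "tk k = snd (st k)" for k
  define Nk where "Nk k = Nsel k (vk k) (tk k)" for k
  have st0: "vk 0 = (\<lambda>_. 1)" "tk 0 = 1" by (simp_all add: vk_def tk_def st_0)
  have stS: "vk (Suc k) = (\<lambda>i. if i < Nk k then vk k i else if i < 4 * Nk k then 0 else 1)"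
    "tk (Suc k) = 4 * Nk k" for k
    unfolding vk_def tk_def Nk_def by (simp_all add: st_Suc step_def Let_def)
  have inv: "vk k \<in> words {0,1} \<and> (\<forall>i\<ge>tk k. vk k i = 1)" for k
  proof (induction k)
    case 0 then show ?case by (simp add: st0 words_def)
  next
    case (Suc k)
    then have "Nk k \<ge> tk k" using Nsel[of "vk k" "tk k" k] by (simp add: Nk_def)
    then show ?case using Suc by (auto simp: stS words_def)
  qed
  have NkP: "Nk k \<ge> tk k \<and> P k (vk k) (tk k) (Nk k)" for k
    using Nsel[of "vk k" "tk k" k] inv[of k] by (simp add: Nk_def)
  have tk_ge: "tk k \<ge> Suc k" for k
  proof (induction k)
    case (Suc k) then show ?case using NkP[of k] by (simp add: stS)
  qed (simp add: st0)
  have tk_mono: "k \<le> j \<Longrightarrow> tk k \<le> tk j" for k j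
  proof (induction j rule: dec_induct)
    case (step j) then show ?case using NkP[of j] by (simp add: stS)
  qed simp
  have agree: "k \<le> j \<Longrightarrow> i < tk k \<Longrightarrow> vk j i = vk k i" for k j i
  proof (induction j rule: dec_induct)
    case (step j)
    have "i < Nk j" using step tk_mono[of k j] NkP[of j] by linarith
    then show ?case using step by (simp add: stS)
  qed simp
  define w where "w i = vk (Suc i) i" for i
  have w_agree: "w i = vk k i" if "i < tk k" for i k
  proof (cases "Suc i \<le> k")
    case True then show ?thesis unfolding w_def using agree[OF True] tk_ge[of "Suc i"] by simp
  next
    case False then show ?thesis unfolding w_def using agree[of k "Suc i" i] that by simp
  qed
  show thesis
  proof
    show w01: "w \<in> words {0,1}" using inv by (auto simp: w_def words_def)
    have "\<exists>n\<ge>K. letter_avg w n \<le> 1/4" for K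
      using w01 NkP[of K] tk_ge[of K] w_agree[of _ "Suc K"]
      by (intro exI[of _ "4 * Nk K"] conjI letter_avg_le_quarter_if_zero_block) (auto simp: stS)
    then show "\<forall>K. \<exists>n\<ge>K. letter_avg w n \<le> 1/4" by blast
    have "\<exists>v t N. Suc k \<le> t \<and> P k v t N \<and> (\<forall>i<N. v i = w i)" for k
      using NkP[of k] tk_ge[of k] w_agree[of _ "Suc k"]
      by (intro exI[of _ "vk k"] exI[of _ "tk k"] exI[of _ "Nk k"]) (auto simp: stS)
    then show "\<forall>k. \<exists>v t N. Suc k \<le> t \<and> P k v t N \<and> (\<forall>i<N. v i = w i)" by blast
  qed
qed

theorem letter_pwa_no_pos_complement:
  "\<not> (\<exists>B. wf_pwa {0,1} B \<and> (\<forall>w\<in>words {0,1}. L_pos B w = 1 - L_pos letter_pwa w))"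
proof
  assume "\<exists>B. wf_pwa {0,1} B \<and> (\<forall>w\<in>words {0,1}. L_pos B w = 1 - L_pos letter_pwa w)"
  then obtain B :: "nat pwa" where H: "\<And>w. w \<in> words {0,1} \<Longrightarrow> L_pos B w = 1 - L_pos letter_pwa w"
    by blast
  have "\<exists>N\<ge>t. 1 - 1 / real (Suc k) \<le> measure (run_measure B v) (dip_event B v (1/2) t N)"
    if v: "v \<in> words {0,1}" "\<forall>i\<ge>t. v i = 1" for k v t
  proof -
    have "ereal (3/4) \<le> LimAvg (weight_seq letter_pwa v r)" for r
      by (rule LimAvg_ge_if_eventually_one) (use v in \<open>auto simp: weight_seq_letter_pwa\<close>)
    then obtain x where "L_pos letter_pwa v = ereal x" "3/4 \<le> x"
      using L_letter_pwa(1)[OF v(1)] liminf_letter_avg_real[OF v(1)] by (force simp: LimAvg_letter_pwa)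
    then have "L_pos B v < ereal (1/2)" using H[OF v(1)] by simp
    then have "measure (run_measure B v) {r. ereal (1/2) \<le> LimAvg (weight_seq B v r)} = 0"
      by (rule measure_LimAvg_ge_eq_0_if_L_pos_less)
    then show ?thesis by (rule dip_event_likely_if_LimAvg_ge_null) simp
  qed
  then obtain w where w: "w \<in> words {0,1}" and sparse: "\<forall>K. \<exists>n\<ge>K. letter_avg w n \<le> 1/4"
    and dips: "\<forall>k. \<exists>v t N. Suc k \<le> t \<and> 1 - 1 / real (Suc k) \<le> measure (run_measure B v) (dip_event B v (1/2) t N)
                 \<and> (\<forall>i<N. v i = w i)"
    by (rule diagonal_word_exists[where P = "\<lambda>k v t N. 1 - 1 / real (Suc k) \<le> measure (run_measure B v) (dip_event B v (1/2) t N)"])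
  have "L_pos letter_pwa w \<le> ereal (1/4)"
    unfolding L_letter_pwa(1)[OF w] by (rule liminf_le_if_frequently_le) (use sparse in auto)
  then have "ereal (3/4) \<le> L_pos B w"
    using H[OF w] liminf_letter_avg_real[OF w] L_letter_pwa(1)[OF w] by auto
  moreover have "L_pos B w \<le> ereal (1/2)"
  proof (rule L_pos_le_if_dip_events_likely)
    fix K :: nat and \<delta> :: real assume "0 < \<delta>"
    then obtain m :: nat where "0 < m" "inverse (real m) < \<delta>" using ex_inverse_of_nat_less by blast
    moreover have "1 / real (Suc (max m K)) \<le> 1 / real m"
      using \<open>0 < m\<close> by (intro divide_left_mono) auto
    ultimately have "1 / real (Suc (max m K)) \<le> \<delta>" by (simp add: inverse_eq_divide)
    moreover obtain v t N where "Suc (max m K) \<le> t" "\<forall>i<N. v i = w i"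
      "1 - 1 / real (Suc (max m K)) \<le> measure (run_measure B v) (dip_event B v (1/2) t N)"
      using dips by blast
    ultimately show "\<exists>t N. K \<le> t \<and> 1 - \<delta> \<le> measure (run_measure B w) (dip_event B w (1/2) t N)"
      using measure_dip_event_cong_word[of N v w B "1/2" t] by (intro exI[of _ t] exI[of _ N]) auto
  qed
  ultimately have "ereal (3/4) \<le> ereal (1/2)" by (rule order.trans)
  then show False by simp
qed

section \<open>AsLimAvg is not closed under complement\<close>

definition coin_pwa :: "nat pwa" where
  "coin_pwa = \<lparr>pstates = {0,1}, pinit = return_pmf 0,
     ptrans = (\<lambda>q \<sigma>. if q = 0 \<and> \<sigma> = 1 then pmf_of_set {0,1} else return_pmf q),
     pweight = (\<lambda>q \<sigma> q'. if q = 1 then 1 else 0)\<rparr>"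

lemma wf_coin_pwa: "wf_pwa {0,1} coin_pwa"
  by (auto simp: wf_pwa_def coin_pwa_def)

lemma weight_seq_coin_pwa: "weight_seq coin_pwa w r i = (if r i = 1 then 1 else 0)"
  by (simp add: weight_seq_def coin_pwa_def)

lemma set_pmf_prefix_pmf_coin_pwaD:
  assumes "xs \<in> set_pmf (prefix_pmf coin_pwa w n)"
  shows "(\<forall>i\<le>n. xs ! i \<in> {0,1}) \<and> (\<forall>i<n. xs ! i = 1 \<longrightarrow> xs ! Suc i = 1)"
proof -
  from set_pmf_prefix_pmfD[OF assms] have s0: "xs ! 0 = 0"
    and sS: "\<And>i. i < n \<Longrightarrow> xs ! Suc i \<in> set_pmf (ptrans coin_pwa (xs ! i) (w i))"
    by (auto simp: coin_pwa_def)
  have step: "xs ! Suc i \<in> {0,1} \<union> {xs ! i}" "xs ! i = 1 \<longrightarrow> xs ! Suc i = 1" if "i < n" for i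
    using sS[OF that] by (auto simp: coin_pwa_def split: if_splits)
  have "xs ! i \<in> {0,1}" if "i \<le> n" for i
    using that
  proof (induction i)
    case 0 then show ?case using s0 by simp
  next
    case (Suc i) then show ?case using step(1)[of i] by auto
  qed
  then show ?thesis using step(2) by auto
qed

definition coin_runs :: "(nat \<Rightarrow> nat) set" where
  "coin_runs = {r. \<forall>i. r i \<in> {0,1} \<and> (r i = 1 \<longrightarrow> r (Suc i) = 1)}"

lemma AE_coin_runs: "AE r in run_measure coin_pwa w. r \<in> coin_runs"
proof -
  interpret prob_space "run_measure coin_pwa w" by (rule prob_space_run_measure)
  define Bad :: "nat \<Rightarrow> (nat \<Rightarrow> nat) set" where "Bad n = {r. \<not> ((\<forall>i\<le>n. r i \<in> {0,1}) \<and> (\<forall>i<n. r i = 1 \<longrightarrow> r (Suc i) = 1))}" for n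
  have inv: "\<And>r r'. (\<And>i. i \<le> n \<Longrightarrow> r i = r' i) \<Longrightarrow>
      (\<not> ((\<forall>i\<le>n. r i \<in> {0,1}) \<and> (\<forall>i<n. r i = 1 \<longrightarrow> r (Suc i) = 1))) =
      (\<not> ((\<forall>i\<le>n. r' i \<in> {0,1}) \<and> (\<forall>i<n. r' i = 1 \<longrightarrow> r' (Suc i) = 1)))" for n
    by (metis Suc_leI less_imp_le)
  have Bs: "Bad n \<in> sets (run_measure coin_pwa w)" for n
    unfolding Bad_def sets_run_measure by (rule finite_horizon_in_sets) (rule inv)
  have B0: "measure (run_measure coin_pwa w) (Bad n) = 0" for n
  proof -
    have "measure (run_measure coin_pwa w) (Bad n) = measure_pmf.prob (prefix_pmf coin_pwa w n)
        {xs. \<not> ((\<forall>i\<le>n. xs ! i \<in> {0,1}) \<and> (\<forall>i<n. xs ! i = 1 \<longrightarrow> xs ! Suc i = 1))}"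
      unfolding Bad_def by (rule measure_run_measure_finite_horizon) (rule inv)
    also have "\<dots> = 0"
    proof -
      have "set_pmf (prefix_pmf coin_pwa w n) \<inter> {xs. \<not> ((\<forall>i\<le>n. xs ! i \<in> {0,1}) \<and> (\<forall>i<n. xs ! i = 1 \<longrightarrow> xs ! Suc i = 1))} = {}"
        using set_pmf_prefix_pmf_coin_pwaD[of _ w n] by blast
      then show ?thesis by (simp only: measure_pmf_zero_iff)
    qed
    finally show ?thesis .
  qed
  have "(\<Union>n. Bad n) \<in> null_sets (run_measure coin_pwa w)"
    using Bs B0 by (intro null_sets_UN) (auto simp: emeasure_eq_measure)
  moreover have "UNIV - coin_runs \<subseteq> (\<Union>n. Bad n)"
  proof
    fix r assume "r \<in> UNIV - coin_runs"
    then obtain i where i: "\<not> (r i \<in> {0,1} \<and> (r i = 1 \<longrightarrow> r (Suc i) = 1))" by (auto simp: coin_runs_def)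
    have "\<not> ((\<forall>k\<le>Suc i. r k \<in> {0,1}) \<and> (\<forall>k<Suc i. r k = 1 \<longrightarrow> r (Suc k) = 1))"
    proof
      assume h: "(\<forall>k\<le>Suc i. r k \<in> {0,1}) \<and> (\<forall>k<Suc i. r k = 1 \<longrightarrow> r (Suc k) = 1)"
      have "r i \<in> {0,1}" using h le_SucI[OF order_refl] by blast
      moreover have "r i = 1 \<longrightarrow> r (Suc i) = 1" using h lessI by blast
      ultimately show False using i by blast
    qed
    then have "r \<in> Bad (Suc i)" unfolding Bad_def by blast
    then show "r \<in> (\<Union>n. Bad n)" by blast
  qed
  ultimately show ?thesis
    by (intro AE_I[where N="\<Union>n. Bad n"]) (auto simp: emeasure_eq_measure null_sets_def)
qed

lemma coin_runs_absorbing: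
  assumes "r \<in> coin_runs" "r j = 1" "j \<le> i" shows "r i = 1"
  using assms(3)
proof (induction i rule: dec_induct)
  case base then show ?case using assms(2) by simp
next
  case (step i) then show ?case using assms(1) by (auto simp: coin_runs_def)
qed

definition stay_prob :: "(nat \<Rightarrow> nat) \<Rightarrow> nat \<Rightarrow> real" where "stay_prob w n = prefix_prob coin_pwa w n (\<lambda>_. 0)"

lemma stay_prob_Suc: "stay_prob w (Suc n) = stay_prob w n * (if w n = 1 then 1/2 else 1)"
  by (simp add: stay_prob_def prefix_prob_Suc coin_pwa_def)

lemma stay_prob_0: "stay_prob w 0 = 1"
  by (simp add: stay_prob_def prefix_prob_def coin_pwa_def)

lemma stay_prob_pos: "stay_prob w n > 0"
  by (induction n) (auto simp: stay_prob_0 stay_prob_Suc)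

lemma stay_prob_le_one: "stay_prob w n \<le> 1"
  by (induction n) (auto simp: stay_prob_0 stay_prob_Suc intro: order.trans[OF mult_left_le])

lemma stay_prob_antimono: "m \<le> n \<Longrightarrow> stay_prob w n \<le> stay_prob w m"
proof (induction n rule: dec_induct)
  case (step n)
  have "stay_prob w (Suc n) \<le> stay_prob w n" using stay_prob_pos[of w n] by (auto simp: stay_prob_Suc)
  then show ?case using step by simp
qed simp

lemma never_leave_eq: "{r. \<forall>i. r i = 0} = (\<Inter>n. cyl n (\<lambda>_. 0))"
  by (auto simp: cyl_eq)

lemma measure_never_leave_le: "measure (run_measure coin_pwa w) {r. \<forall>i. r i = 0} \<le> stay_prob w n"
proof -
  interpret prob_space "run_measure coin_pwa w" by (rule prob_space_run_measure)
  have "{r. \<forall>i. r i = 0} \<subseteq> cyl n (\<lambda>_. 0)" by (auto simp: cyl_eq)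
  then have "measure (run_measure coin_pwa w) {r. \<forall>i. r i = 0} \<le> measure (run_measure coin_pwa w) (cyl n (\<lambda>_. 0))"
    by (intro finite_measure_mono) auto
  then show ?thesis by (simp add: measure_run_measure_cyl stay_prob_def)
qed

lemma ereal_one_le_if_dense: "(\<And>\<eta>. \<eta> < 1 \<Longrightarrow> ereal \<eta> \<le> x) \<Longrightarrow> 1 \<le> x"
proof (cases x)
  case (real x')
  assume h: "\<And>\<eta>. \<eta> < 1 \<Longrightarrow> ereal \<eta> \<le> x"
  show ?thesis
  proof (rule ccontr)
    assume "\<not> 1 \<le> x"
    then have "x' < 1" using real by simp
    then have "ereal ((x' + 1) / 2) \<le> x" by (intro h) simp
    then show False using real \<open>x' < 1\<close> by simp
  qed
next
  case MInf
  assume h: "\<And>\<eta>. \<eta> < 1 \<Longrightarrow> ereal \<eta> \<le> x"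
  from h[of 0] MInf show ?thesis by simp
qed simp

lemma LimAvg_coin_pwa_le_one: "LimAvg (weight_seq coin_pwa w r) \<le> 1"
  by (rule LimAvg_le_one) (simp add: weight_seq_coin_pwa)

lemma LimAvg_coin_pwa_nonneg: "0 \<le> LimAvg (weight_seq coin_pwa w r)"
  by (rule LimAvg_nonneg) (simp add: weight_seq_coin_pwa)

lemma stay_prob_const:
  assumes h: "\<And>i. i \<ge> m \<Longrightarrow> w i \<noteq> 1" and mn: "m \<le> n" shows "stay_prob w n = stay_prob w m"
  using mn
proof (induction n rule: dec_induct)
  case (step n) then show ?case using h[of n] by (simp add: stay_prob_Suc)
qed simp

lemma sets_never_leave[measurable]: "{r. \<forall>i. r i = 0} \<in> sets seq_space"
  unfolding never_leave_eq by (simp add: sets.countable_INT)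

lemma stay_prob_le_half_power:
  assumes inf: "\<And>N. \<exists>i\<ge>N. w i = 1"
  shows "\<exists>n. stay_prob w n \<le> (1/2) ^ K"
proof (induction K)
  case 0 then show ?case using stay_prob_le_one by auto
next
  case (Suc K)
  then obtain n where n: "stay_prob w n \<le> (1/2) ^ K" by blast
  obtain i where i: "i \<ge> n" "w i = 1" using inf by blast
  have "stay_prob w (Suc i) = stay_prob w i / 2" using i by (simp add: stay_prob_Suc)
  also have "\<dots> \<le> stay_prob w n / 2" using stay_prob_antimono[OF i(1)] by simp
  also have "\<dots> \<le> (1/2) ^ Suc K" using n by simp
  finally show ?case by blast
qed

lemma measure_never_leave_eq_0:
  assumes "\<And>N. \<exists>i\<ge>N. w i = 1"
  shows "measure (run_measure coin_pwa w) {r. \<forall>i. r i = 0} = 0"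
proof (rule ccontr)
  assume "measure (run_measure coin_pwa w) {r. \<forall>i. r i = 0} \<noteq> 0"
  then have "0 < measure (run_measure coin_pwa w) {r. \<forall>i. r i = 0}" by (simp add: less_le)
  then obtain K where K: "(1/2::real) ^ K < measure (run_measure coin_pwa w) {r. \<forall>i. r i = 0}"
    using real_arch_pow_inv[of _ "1/2"] by auto
  obtain n where "stay_prob w n \<le> (1/2) ^ K" using stay_prob_le_half_power[OF assms] by blast
  with measure_never_leave_le[of w n] K show False by simp
qed

lemma measure_never_leave_eq_stay_prob:
  assumes "\<And>i. i \<ge> m \<Longrightarrow> w i = 0"
  shows "measure (run_measure coin_pwa w) {r. \<forall>i. r i = 0} = stay_prob w m"
proof -
  interpret prob_space "run_measure coin_pwa w" by (rule prob_space_run_measure)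
  have lim: "(\<lambda>n. measure (run_measure coin_pwa w) (cyl n (\<lambda>_. 0))) \<longlonglongrightarrow> measure (run_measure coin_pwa w) (\<Inter>n. cyl n (\<lambda>_. 0))"
  proof (rule Lim_measure_decseq)
    show "range (\<lambda>n. cyl n (\<lambda>_. 0)) \<subseteq> sets (run_measure coin_pwa w)" by auto
    show "decseq (\<lambda>n. cyl n (\<lambda>_. 0::nat))" by (auto simp: decseq_def cyl_eq)
  qed simp
  have "eventually (\<lambda>n. measure (run_measure coin_pwa w) (cyl n (\<lambda>_. 0)) = stay_prob w m) sequentially"
    unfolding eventually_sequentially
    by (intro exI[of _ m] allI impI) (auto simp: measure_run_measure_cyl stay_prob_def[symmetric] intro!: stay_prob_const dest: assms)
  from LIMSEQ_unique[OF lim tendsto_eventually[OF this]] show ?thesis by (simp add: never_leave_eq)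
qed

lemma L_as_coin_pwa_if_infinitely_many_ones:
  assumes inf: "\<And>N. \<exists>i\<ge>N. w i = 1"
  shows "L_as coin_pwa w = 1"
proof (rule antisym)
  interpret prob_space "run_measure coin_pwa w" by (rule prob_space_run_measure)
  have "L_as coin_pwa w \<le> ereal 1"
  proof (rule L_as_le)
    fix \<eta> :: real assume "\<eta> > 1"
    then have "LimAvg (weight_seq coin_pwa w r) < ereal \<eta>" for r
      by (intro le_less_trans[OF LimAvg_coin_pwa_le_one]) (simp add: one_ereal_def)
    then have "{r. ereal \<eta> \<le> LimAvg (weight_seq coin_pwa w r)} = {}" by (auto dest: leD)
    then show "measure (run_measure coin_pwa w) {r. ereal \<eta> \<le> LimAvg (weight_seq coin_pwa w r)} \<noteq> 1" by simp
  qed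
  then show "L_as coin_pwa w \<le> 1" by (simp add: one_ereal_def)
  have "AE r in run_measure coin_pwa w. r \<notin> {r. \<forall>i. r i = 0}"
    using measure_never_leave_eq_0[OF inf]
    by (intro AE_not_in) (auto simp: null_sets_def emeasure_eq_measure)
  then have "AE r in run_measure coin_pwa w. r \<in> coin_runs \<and> r \<notin> {r. \<forall>i. r i = 0}"
    using AE_coin_runs[of w] by eventually_elim simp
  then have "ereal \<eta> \<le> L_as coin_pwa w" if "\<eta> < 1" for \<eta>
  proof (intro L_as_ge, subst prob_eq_1)
    show "AE r in run_measure coin_pwa w. r \<in> {r. ereal \<eta> \<le> LimAvg (weight_seq coin_pwa w r)}"
      using \<open>AE r in run_measure coin_pwa w. r \<in> coin_runs \<and> r \<notin> {r. \<forall>i. r i = 0}\<close>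
    proof eventually_elim
      case (elim r)
      then obtain j where "r j \<noteq> 0" by auto
      moreover have "r j \<in> {0,1}" using elim unfolding coin_runs_def by blast
      ultimately have "r j = 1" by simp
      then show ?case
        using coin_runs_absorbing[of r j] elim \<open>\<eta> < 1\<close>
        by (auto intro!: LimAvg_ge_if_eventually_one[where j=j] simp: weight_seq_coin_pwa)
    qed
  qed (auto simp: sets_LimAvg_ge)
  then show "1 \<le> L_as coin_pwa w" by (rule ereal_one_le_if_dense)
qed

lemma L_as_coin_pwa_if_finitely_many_ones:
  assumes fin: "\<And>i. i \<ge> m \<Longrightarrow> w i = 0"
  shows "L_as coin_pwa w = 0"
proof (rule antisym)
  interpret prob_space "run_measure coin_pwa w" by (rule prob_space_run_measure)
  have "{r. ereal 0 \<le> LimAvg (weight_seq coin_pwa w r)} = UNIV"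
    using LimAvg_coin_pwa_nonneg by (auto simp: zero_ereal_def)
  then have "ereal 0 \<le> L_as coin_pwa w" using prob_space by (intro L_as_ge) simp
  then show "0 \<le> L_as coin_pwa w" by (simp add: zero_ereal_def)
  have Zm: "measure (run_measure coin_pwa w) {r. \<forall>i. r i = 0} = stay_prob w m"
    using measure_never_leave_eq_stay_prob fin by blast
  have "L_as coin_pwa w \<le> ereal 0"
  proof (rule L_as_le)
    fix \<eta> :: real assume "\<eta> > 0"
    have "LimAvg (weight_seq coin_pwa w r) = 0" if "\<forall>i. r i = 0" for r
      using that by (intro LimAvg_zero) (simp add: weight_seq_coin_pwa)
    then have "{r. ereal \<eta> \<le> LimAvg (weight_seq coin_pwa w r)} \<subseteq> space (run_measure coin_pwa w) - {r. \<forall>i. r i = 0}"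
      using \<open>\<eta> > 0\<close> by (auto simp: zero_ereal_def)
    then have "measure (run_measure coin_pwa w) {r. ereal \<eta> \<le> LimAvg (weight_seq coin_pwa w r)}
        \<le> measure (run_measure coin_pwa w) (space (run_measure coin_pwa w) - {r. \<forall>i. r i = 0})"
      using sets.compl_sets[of "{r. \<forall>i. r i = 0}" "run_measure coin_pwa w"] by (intro finite_measure_mono) auto
    also have "\<dots> = 1 - stay_prob w m" using prob_compl[of "{r. \<forall>i. r i = 0}"] Zm by simp
    also have "\<dots> < 1" using stay_prob_pos[of w m] by simp
    finally show "measure (run_measure coin_pwa w) {r. ereal \<eta> \<le> LimAvg (weight_seq coin_pwa w r)} \<noteq> 1" by simp
  qed
  then show "L_as coin_pwa w \<le> 0" by (simp add: zero_ereal_def)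
qed

definition block_deficit_event :: "'a pwa \<Rightarrow> (nat \<Rightarrow> 'a) \<Rightarrow> nat \<Rightarrow> nat \<Rightarrow> nat \<Rightarrow> (nat \<Rightarrow> nat) set" where
  "block_deficit_event B w C t n = {r. \<exists>s\<le>n. psum B w r (t + s) - psum B w r t < real s / 2 - real C}"

lemma sets_block_deficit_event[measurable]: "block_deficit_event B w C t n \<in> sets seq_space"
proof -
  have "block_deficit_event B w C t n =
      {r \<in> space seq_space. \<exists>s\<le>n. psum B w r (t + s) - psum B w r t < real s / 2 - real C}"
    by (simp add: block_deficit_event_def)
  also have "\<dots> \<in> sets seq_space" by measurable
  finally show ?thesis .
qed

definition zero_word_deficit_event :: "nat pwa \<Rightarrow> nat \<Rightarrow> nat \<Rightarrow> (nat \<Rightarrow> nat) set" where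
  "zero_word_deficit_event B C n = {r. \<exists>s\<le>n. psum B (\<lambda>_. 0) r s < real s / 2 - real C}"

lemma deficit_event_cong_run: fixes B :: "nat pwa" shows "(\<And>i. i \<le> n \<Longrightarrow> r i = r' i) \<Longrightarrow>
   (\<exists>s\<le>n. psum B (\<lambda>_. 0) r s < real s / 2 - real C) = (\<exists>s\<le>n. psum B (\<lambda>_. 0) r' s < real s / 2 - real C)"
  using psum_cong_run[of n r r' _ B "\<lambda>_. 0::nat"] by auto

lemma zero_word_deficit_event_antimono: "C \<le> C' \<Longrightarrow> zero_word_deficit_event B C' n \<subseteq> zero_word_deficit_event B C n"
  unfolding zero_word_deficit_event_def by force

lemma bounded_deficit_likely:
  assumes likely: "measure (run_measure B v) {r. ereal (3/4) \<le> LimAvg (weight_seq B v r)} = 1" and "0 < \<epsilon>"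
  obtains C :: nat where
    "1 - \<epsilon> < measure (run_measure B v) {r. \<forall>s. real s / 2 - real C \<le> psum B v r (t + s) - psum B v r t}"
proof -
  interpret prob_space "run_measure B v" by (rule prob_space_run_measure)
  define U :: "nat \<Rightarrow> (nat \<Rightarrow> nat) set"
    where "U C = {r. \<forall>s. real s / 2 - real C \<le> psum B v r (t + s) - psum B v r t}" for C
  have U_sets: "U C \<in> sets (run_measure B v)" for C
  proof -
    have "U C = (\<Inter>s. {r \<in> space seq_space. real s / 2 - real C \<le> psum B v r (t + s) - psum B v r t})"
      by (auto simp: U_def)
    also have "\<dots> \<in> sets seq_space" by measurable
    finally show ?thesis by simp
  qed
  have "incseq U"
  proof (rule incseq_SucI, rule subsetI)
    fix C r assume "r \<in> U C"
    then have "real s / 2 - real (Suc C) \<le> psum B v r (t + s) - psum B v r t" for s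
      unfolding U_def by (smt (verit) mem_Collect_eq of_nat_Suc)
    then show "r \<in> U (Suc C)" by (simp add: U_def)
  qed
  then have lim: "(\<lambda>C. measure (run_measure B v) (U C)) \<longlonglongrightarrow> measure (run_measure B v) (\<Union>C. U C)"
    using U_sets by (intro Lim_measure_incseq) auto
  have "AE r in run_measure B v. r \<in> {r. ereal (3/4) \<le> LimAvg (weight_seq B v r)}"
    using likely by (subst (asm) prob_eq_1) (auto simp: sets_LimAvg_ge)
  then have "AE r in run_measure B v. r \<in> (\<Union>C. U C)"
  proof eventually_elim
    case (elim r)
    then obtain C where "\<forall>s. real s / 2 - real C \<le> psum B v r (t + s) - psum B v r t"
      using linear_lower_bound_if_LimAvg_ge[of B v r t] by auto
    then show ?case by (auto simp: U_def)
  qed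
  then have "measure (run_measure B v) (\<Union>C. U C) = 1"
    using U_sets by (subst prob_eq_1) auto
  with order_tendstoD(1)[OF lim, of "1 - \<epsilon>"] \<open>0 < \<epsilon>\<close> obtain C where "1 - \<epsilon> < measure (run_measure B v) (U C)"
    by (auto simp: eventually_sequentially)
  then show thesis by (intro that[of C]) (simp add: U_def)
qed

text \<open>Conditioning on the state q at a time after which the word is constantly 0 turns the
  deficit bound for the whole run into a bound for the runs started in q.\<close>

lemma deficit_constant_exists:
  fixes B :: "nat pwa"
  assumes likely: "measure (run_measure B v) {r. ereal (3/4) \<le> LimAvg (weight_seq B v r)} = 1"
    and v0: "\<forall>i\<ge>t. v i = 0" and p: "0 < measure (run_measure B v) {r. r t = q}" and "\<delta> > 0"
  shows "\<exists>C::nat. \<forall>n. measure (run_measure (start_at B q) (\<lambda>_. 0)) (zero_word_deficit_event B C n) \<le> \<delta>"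
proof -
  interpret prob_space "run_measure B v" by (rule prob_space_run_measure)
  let ?p = "measure (run_measure B v) {r. r t = q}"
  obtain C where C: "1 - ?p * \<delta> < measure (run_measure B v) {r. \<forall>s. real s / 2 - real C \<le> psum B v r (t + s) - psum B v r t}"
    using bounded_deficit_likely[OF likely, of "?p * \<delta>" t] p \<open>\<delta> > 0\<close> by auto
  let ?U = "{r. \<forall>s. real s / 2 - real C \<le> psum B v r (t + s) - psum B v r t}"
  have U_sets: "?U \<in> sets (run_measure B v)"
  proof -
    have "?U = (\<Inter>s. {r \<in> space seq_space. real s / 2 - real C \<le> psum B v r (t + s) - psum B v r t})" by auto
    also have "\<dots> \<in> sets seq_space" by measurable
    finally show ?thesis by simp
  qed
  have "measure (run_measure (start_at B q) (\<lambda>_. 0)) (zero_word_deficit_event B C n) \<le> \<delta>" for n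
  proof -
    let ?\<Phi> = "\<lambda>r. \<exists>s\<le>n. psum B (\<lambda>_. 0) r s < real s / 2 - real C"
    have v_shift: "(\<lambda>i. v (t + i)) = (\<lambda>_. 0)" using v0 by auto
    have "psum B v r (t + s) - psum B v r t = psum B (\<lambda>_. 0) (\<lambda>i. r (t + i)) s" for r s
      using psum_shift[of B v r t s] v_shift by simp
    then have E: "{r. r t = q \<and> ?\<Phi> (\<lambda>i. r (t + i))} = {r. r t = q} \<inter> block_deficit_event B v C t n"
      by (auto simp: block_deficit_event_def)
    have "?p * measure (run_measure (start_at B q) (\<lambda>_. 0)) (zero_word_deficit_event B C n) =
        measure (run_measure B v) {r. r t = q \<and> ?\<Phi> (\<lambda>i. r (t + i))}"
      using measure_run_measure_state_shift[of n ?\<Phi> B v t q, OF deficit_event_cong_run]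
      by (simp add: v_shift zero_word_deficit_event_def)
    also have "\<dots> \<le> measure (run_measure B v) (space (run_measure B v) - ?U)"
      unfolding E using sets.compl_sets[OF U_sets]
      by (intro finite_measure_mono) (auto simp: block_deficit_event_def, meson not_le)
    also have "\<dots> < ?p * \<delta>" using C prob_compl[OF U_sets] by simp
    finally show ?thesis using p by simp
  qed
  then show ?thesis by blast
qed

lemma uniform_deficit_constant_exists:
  fixes B :: "nat pwa"
  assumes wf: "wf_pwa \<Sigma> B"
    and likely: "\<And>v m. v \<in> words \<Sigma> \<Longrightarrow> \<forall>i\<ge>m. v i = 0 \<Longrightarrow>
      measure (run_measure B v) {r. ereal (3/4) \<le> LimAvg (weight_seq B v r)} = 1"
  obtains C where "\<And>\<delta> q n v t. 0 < \<delta> \<Longrightarrow> v \<in> words \<Sigma> \<Longrightarrow> \<forall>i\<ge>t. v i = 0 \<Longrightarrow>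
      0 < measure (run_measure B v) {r. r t = q} \<Longrightarrow>
      measure (run_measure (start_at B q) (\<lambda>_. 0)) (zero_word_deficit_event B (C \<delta>) n) \<le> \<delta>"
proof -
  define R where "R = {q. \<exists>v t. v \<in> words \<Sigma> \<and> (\<forall>i\<ge>t. v i = 0) \<and> 0 < measure (run_measure B v) {r. r t = q}}"
  have "R \<subseteq> pstates B" using state_in_pstates_if_pos[OF wf] by (auto simp: R_def)
  then have "finite R" using wf finite_subset by (auto simp: wf_pwa_def)
  define Cq where "Cq \<delta> q = (SOME C::nat. \<forall>n. measure (run_measure (start_at B q) (\<lambda>_. 0)) (zero_word_deficit_event B C n) \<le> \<delta>)"
    for \<delta> q
  define C where "C \<delta> = Max (insert 0 (Cq \<delta> ` R))" for \<delta>
  show thesis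
  proof (rule that)
    fix \<delta> :: real and q n v t
    assume \<delta>: "0 < \<delta>" and v: "v \<in> words \<Sigma>" "\<forall>i\<ge>t. v i = 0"
      and pos: "0 < measure (run_measure B v) {r. r t = q}"
    then have "q \<in> R" unfolding R_def by blast
    have "\<exists>C::nat. \<forall>n. measure (run_measure (start_at B q) (\<lambda>_. 0)) (zero_word_deficit_event B C n) \<le> \<delta>"
      by (rule deficit_constant_exists[OF likely[OF v] v(2) pos \<delta>])
    then have Cq: "measure (run_measure (start_at B q) (\<lambda>_. 0)) (zero_word_deficit_event B (Cq \<delta> q) n) \<le> \<delta>"
      unfolding Cq_def by (rule someI_ex[THEN spec])
    interpret prob_space "run_measure (start_at B q) (\<lambda>_. 0)" by (rule prob_space_run_measure)
    have "Cq \<delta> q \<le> C \<delta>" unfolding C_def using \<open>finite R\<close> \<open>q \<in> R\<close> by (intro Max_ge) auto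
    then have "zero_word_deficit_event B (C \<delta>) n \<subseteq> zero_word_deficit_event B (Cq \<delta> q) n" by (rule zero_word_deficit_event_antimono)
    moreover have "zero_word_deficit_event B (Cq \<delta> q) n \<in> sets (run_measure (start_at B q) (\<lambda>_. 0))"
      unfolding zero_word_deficit_event_def sets_run_measure by (rule finite_horizon_in_sets) (rule deficit_event_cong_run)
    ultimately have "measure (run_measure (start_at B q) (\<lambda>_. 0)) (zero_word_deficit_event B (C \<delta>) n)
        \<le> measure (run_measure (start_at B q) (\<lambda>_. 0)) (zero_word_deficit_event B (Cq \<delta> q) n)"
      by (rule finite_measure_mono)
    then show "measure (run_measure (start_at B q) (\<lambda>_. 0)) (zero_word_deficit_event B (C \<delta>) n) \<le> \<delta>"
      using Cq by (rule order.trans)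
  qed
qed

lemma weight_seq_bounded:
  assumes wf: "wf_pwa \<Sigma> B" and "finite \<Sigma>"
  obtains W :: nat where "\<And>w r i. w \<in> words \<Sigma> \<Longrightarrow> r i \<in> pstates B \<Longrightarrow> r (Suc i) \<in> pstates B \<Longrightarrow>
    \<bar>weight_seq B w r i\<bar> \<le> real W"
proof
  let ?T = "pstates B \<times> \<Sigma> \<times> pstates B"
  define Wr where "Wr = Max (insert 0 ((\<lambda>(q, \<sigma>, q'). \<bar>real_of_rat (pweight B q \<sigma> q')\<bar>) ` ?T))"
  fix w r i assume "w \<in> words \<Sigma>" "r i \<in> pstates B" "r (Suc i) \<in> pstates B"
  moreover have "finite ?T" using wf \<open>finite \<Sigma>\<close> by (simp add: wf_pwa_def)
  ultimately have "\<bar>weight_seq B w r i\<bar> \<le> Wr"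
    unfolding Wr_def weight_seq_def words_def
    by (intro Max_ge) (auto intro!: image_eqI[of _ _ "(r i, w i, r (Suc i))"])
  then show "\<bar>weight_seq B w r i\<bar> \<le> real (nat \<lceil>Wr\<rceil>)" by linarith
qed

lemma block_word_exists:
  fixes n :: "nat \<Rightarrow> nat"
  obtains t and w :: "nat \<Rightarrow> nat" where "\<And>k. t (Suc k) = t k + n k + 1" "w \<in> words {0,1}"
    "\<And>k i. i < n k \<Longrightarrow> w (t k + i) = 0" "\<And>N. \<exists>i\<ge>N. w i = 1"
proof -
  obtain t where t0: "t 0 = 0" and tS: "\<And>k. t (Suc k) = t k + n k + 1"
  proof -
    show ?thesis by (rule that[of "rec_nat 0 (\<lambda>k x. x + n k + 1)"]) simp_all
  qed
  have t_mono: "i \<le> j \<Longrightarrow> t i \<le> t j" for i j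
    by (induction j rule: dec_induct) (auto simp: tS intro: order.trans)
  define w where "w i = (if \<exists>k. i = t k + n k then 1 else 0::nat)" for i
  show thesis
  proof (rule that[of t w, OF tS])
    show "w \<in> words {0,1}" by (auto simp: w_def words_def)
    show "w (t k + i) = 0" if "i < n k" for k i
    proof -
      have "t k + i \<noteq> t j + n j" for j
      proof (cases j k rule: linorder_cases)
        case less
        then have "t (Suc j) \<le> t k" by (intro t_mono) simp
        then show ?thesis using tS[of j] by simp
      next
        case greater
        then have "t (Suc k) \<le> t j" by (intro t_mono) simp
        then show ?thesis using that tS[of k] by simp
      qed (use that in simp)
      then show ?thesis by (auto simp: w_def)
    qed
    show "\<exists>i\<ge>N. w i = 1" for N
    proof -
      have "N \<le> t N" by (induction N) (auto simp: t0 tS)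
      then show ?thesis by (intro exI[of _ "t N + n N"]) (auto simp: w_def)
    qed
  qed
qed

lemma measure_block_deficit_event_le:
  fixes B :: "nat pwa"
  assumes zeros: "\<And>i. i < n \<Longrightarrow> w (t + i) = 0"
    and bound: "\<And>q. 0 < measure (run_measure B w) {r. r t = q} \<Longrightarrow>
      measure (run_measure (start_at B q) (\<lambda>_. 0)) (zero_word_deficit_event B C n) \<le> \<delta>"
  shows "measure (run_measure B w) (block_deficit_event B w C t n) \<le> \<delta>"
proof -
  let ?\<Phi> = "\<lambda>r. \<exists>s\<le>n. psum B (\<lambda>_. 0) r s < real s / 2 - real C"
  have "psum B w r (t + s) - psum B w r t = psum B (\<lambda>_. 0) (\<lambda>i. r (t + i)) s" if "s \<le> n" for r s
  proof -
    have "psum B w r (t + s) - psum B w r t = psum B (\<lambda>i. w (t + i)) (\<lambda>i. r (t + i)) s"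
      by (rule psum_shift)
    also have "\<dots> = psum B (\<lambda>_. 0) (\<lambda>i. r (t + i)) s"
      by (rule psum_cong_word[OF _ that]) (simp add: zeros)
    finally show ?thesis .
  qed
  then have "block_deficit_event B w C t n = {r. ?\<Phi> (\<lambda>i. r (t + i))}"
    unfolding block_deficit_event_def by auto
  also have "measure (run_measure B w) \<dots> \<le> \<delta>"
  proof (rule measure_run_measure_shift_le)
    show "\<And>r r'. (\<And>i. i \<le> n \<Longrightarrow> r i = r' i) \<Longrightarrow> ?\<Phi> r = ?\<Phi> r'" by (rule deficit_event_cong_run)
    fix q assume pos: "0 < measure (run_measure B w) {r. r t = q}"
    have "measure (run_measure (start_at B q) (\<lambda>i. w (t + i))) {r. ?\<Phi> r} =
        measure (run_measure (start_at B q) (\<lambda>_. 0)) {r. ?\<Phi> r}"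
    proof (rule measure_run_measure_cong_word[where N=n])
      show "w (t + i) = 0" if "i < n" for i using zeros[OF that] .
    qed (rule deficit_event_cong_run)
    also have "\<dots> \<le> \<delta>" using bound[OF pos] by (simp add: zero_word_deficit_event_def)
    finally show "measure (run_measure (start_at B q) (\<lambda>i. w (t + i))) {r. ?\<Phi> r} \<le> \<delta>" .
  qed
  finally show ?thesis .
qed

text \<open>By Borel-Cantelli almost every run eventually keeps every block deficit below the
  constant of its block; the blocks are so long that these constants, and the boundedly many
  weights between blocks, are negligible in the average.\<close>

lemma half_le_L_as_if_block_deficits_summable:
  assumes wf: "wf_pwa \<Sigma> B" and w: "w \<in> words \<Sigma>"
    and W: "\<And>r i. r i \<in> pstates B \<Longrightarrow> r (Suc i) \<in> pstates B \<Longrightarrow> \<bar>weight_seq B w r i\<bar> \<le> real W"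
    and tS: "\<And>k. t (Suc k) = t k + n k + 1"
    and n: "\<And>k. real (k + 2) * (\<Sum>j\<le>Suc k. real (C j + W + 1)) \<le> real (n k)"
    and small: "\<And>k. measure (run_measure B w) (block_deficit_event B w (C k) (t k) (n k)) \<le> (1/2) ^ k"
  shows "ereal (1/2) \<le> L_as B w"
proof (rule L_as_ge)
  interpret prob_space "run_measure B w" by (rule prob_space_run_measure)
  have "summable (\<lambda>k. measure (run_measure B w) (block_deficit_event B w (C k) (t k) (n k)))"
    by (rule summable_comparison_test'[where g="\<lambda>k. (1/2::real) ^ k"]) (use small in auto)
  then have "AE r in run_measure B w.
      eventually (\<lambda>k. r \<in> space (run_measure B w) - block_deficit_event B w (C k) (t k) (n k)) sequentially"
    by (intro borel_cantelli_AE1) (auto simp: emeasure_eq_measure)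
  moreover have "AE r in run_measure B w. \<forall>i. r i \<in> pstates B" by (rule AE_run_in_states[OF wf w])
  ultimately have "AE r in run_measure B w. r \<in> {r. ereal (1/2) \<le> LimAvg (weight_seq B w r)}"
  proof eventually_elim
    case (elim r)
    then obtain K where K: "\<And>k. k \<ge> K \<Longrightarrow> r \<notin> block_deficit_event B w (C k) (t k) (n k)"
      by (auto simp: eventually_sequentially)
    have "ereal (1/2) \<le> liminf (\<lambda>m. ereal ((\<Sum>i<m. weight_seq B w r i) / real m))"
    proof (rule half_le_liminf_avg_of_block_bounds[where t=t and n=n and C=C and W=W and K=K])
      show "t (Suc k) = t k + n k + 1" for k by (rule tS)
      show "real (n k) \<ge> real (k + 2) * (\<Sum>j\<le>Suc k. real (C j + W + 1))" for k by (rule n)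
      show "\<bar>weight_seq B w r i\<bar> \<le> real W" for i using elim(2) by (intro W) auto
      fix k s assume "K \<le> k" "s \<le> n k"
      then show "real s / 2 - real (C k) \<le> (\<Sum>i<t k + s. weight_seq B w r i) - (\<Sum>i<t k. weight_seq B w r i)"
        using K[of k] unfolding block_deficit_event_def psum_def by (auto simp: not_less)
    qed
    then show ?case by (simp add: LimAvg_def)
  qed
  then show "measure (run_measure B w) {r. ereal (1/2) \<le> LimAvg (weight_seq B w r)} = 1"
    by (subst prob_eq_1) (auto simp: sets_LimAvg_ge)
qed

theorem coin_pwa_no_as_complement:
  "\<not> (\<exists>B. wf_pwa {0,1} B \<and> (\<forall>w\<in>words {0,1}. L_as B w = 1 - L_as coin_pwa w))"
proof
  assume "\<exists>B. wf_pwa {0,1} B \<and> (\<forall>w\<in>words {0,1}. L_as B w = 1 - L_as coin_pwa w)"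
  then obtain B :: "nat pwa" where wf: "wf_pwa {0,1} B"
    and H: "\<And>w. w \<in> words {0,1} \<Longrightarrow> L_as B w = 1 - L_as coin_pwa w"
    by blast
  have "measure (run_measure B v) {r. ereal (3/4) \<le> LimAvg (weight_seq B v r)} = 1"
    if v: "v \<in> words {0,1}" "\<forall>i\<ge>m. v i = 0" for v m
  proof -
    have "L_as coin_pwa v = 0" using v(2) by (intro L_as_coin_pwa_if_finitely_many_ones[of m]) auto
    then have "ereal (3/4) < L_as B v" using H[OF v(1)] by (simp add: one_ereal_def)
    then show ?thesis by (rule measure_LimAvg_ge_eq_1_if_L_as_greater)
  qed
  then obtain C where C: "\<And>\<delta> q n v t. 0 < \<delta> \<Longrightarrow> v \<in> words {0,1} \<Longrightarrow> \<forall>i\<ge>t. v i = 0 \<Longrightarrow>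
      0 < measure (run_measure B v) {r. r t = q} \<Longrightarrow>
      measure (run_measure (start_at B q) (\<lambda>_. 0)) (zero_word_deficit_event B (C \<delta>) n) \<le> \<delta>"
    using uniform_deficit_constant_exists[OF wf] by blast
  obtain W where W: "\<And>w r i. w \<in> words {0,1} \<Longrightarrow> r i \<in> pstates B \<Longrightarrow> r (Suc i) \<in> pstates B \<Longrightarrow>
      \<bar>weight_seq B w r i\<bar> \<le> real W"
    using weight_seq_bounded[OF wf] by blast
  define Ck where "Ck k = C ((1/2::real) ^ k)" for k
  define n where "n k = nat \<lceil>real (k + 2) * (\<Sum>j\<le>Suc k. real (Ck j + W + 1))\<rceil>" for k
  obtain t and w :: "nat \<Rightarrow> nat" where tS: "\<And>k. t (Suc k) = t k + n k + 1" and w: "w \<in> words {0,1}"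
    and zeros: "\<And>k i. i < n k \<Longrightarrow> w (t k + i) = 0" and ones: "\<And>N. \<exists>i\<ge>N. w i = 1"
    using block_word_exists[of n] by metis
  have "L_as B w = 0" using H[OF w] L_as_coin_pwa_if_infinitely_many_ones[OF ones] by simp
  moreover have "ereal (1/2) \<le> L_as B w"
  proof (rule half_le_L_as_if_block_deficits_summable[where t=t and n=n and C=Ck, OF wf w W[OF w] tS])
    show "real (k + 2) * (\<Sum>j\<le>Suc k. real (Ck j + W + 1)) \<le> real (n k)" for k
      unfolding n_def by linarith
    show "measure (run_measure B w) (block_deficit_event B w (Ck k) (t k) (n k)) \<le> (1/2) ^ k" for k
    proof (rule measure_block_deficit_event_le[where w=w and t="t k" and n="n k"])
      show "w (t k + i) = 0" if "i < n k" for i using zeros[OF that] .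
      fix q assume pos: "0 < measure (run_measure B w) {r. r (t k) = q}"
      define v where "v i = (if i < t k then w i else 0)" for i
      have "measure (run_measure B v) {r. r (t k) = q} = measure (run_measure B w) {r. r (t k) = q}"
        by (rule measure_run_measure_cong_word[where N="t k"]) (auto simp: v_def)
      then show "measure (run_measure (start_at B q) (\<lambda>_. 0)) (zero_word_deficit_event B (Ck k) (n k)) \<le> (1/2) ^ k"
        unfolding Ck_def using w pos by (intro C[where v=v and t="t k"]) (auto simp: v_def words_def)
    qed
  qed
  ultimately show False by simp
qed

theorem lemma23:
  shows "(\<exists>\<Sigma>::nat set. finite \<Sigma> \<and> (\<exists>A. wf_pwa \<Sigma> A \<and>
            \<not> (\<exists>B. wf_pwa \<Sigma> B \<and> (\<forall>w\<in>words \<Sigma>. L_pos B w = 1 - L_pos A w))))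
       \<and> (\<exists>\<Sigma>::nat set. finite \<Sigma> \<and> (\<exists>A'. wf_pwa \<Sigma> A' \<and>
            \<not> (\<exists>B'. wf_pwa \<Sigma> B' \<and> (\<forall>w\<in>words \<Sigma>. L_as B' w = 1 - L_as A' w))))"
proof (intro conjI)
  show "\<exists>\<Sigma>::nat set. finite \<Sigma> \<and> (\<exists>A. wf_pwa \<Sigma> A \<and>
            \<not> (\<exists>B. wf_pwa \<Sigma> B \<and> (\<forall>w\<in>words \<Sigma>. L_pos B w = 1 - L_pos A w)))"
    using wf_letter_pwa letter_pwa_no_pos_complement by (intro exI[of _ "{0,1}"] conjI exI[of _ letter_pwa]) auto
  show "\<exists>\<Sigma>::nat set. finite \<Sigma> \<and> (\<exists>A'. wf_pwa \<Sigma> A' \<and>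
            \<not> (\<exists>B'. wf_pwa \<Sigma> B' \<and> (\<forall>w\<in>words \<Sigma>. L_as B' w = 1 - L_as A' w)))"
    using wf_coin_pwa coin_pwa_no_as_complement by (intro exI[of _ "{0,1}"] conjI exI[of _ coin_pwa]) auto
qed

end
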